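(* Let $\sigma$ be the standard surface measure on the unit sphere $\mathbb S^n\subset\mathbb R^{n+1}$. Let $H\subset\mathbb S^n$ be an open hemisphere with center $o$, let $B\subset\mathbb S^n$ be a spherical (geodesic) ball of radius at most $\pi/2$ centered at $o$, and let $T\subseteq H$ be a measurable set star-shaped with respect to $o$ (for every $x\in T$ the shortest great-circle arc from $o$ to $x$ lies in $T$). Then \[ \sigma(B\cap T)\,\sigma(H)\ge\sigma(B)\,\sigma(T). \] *)

theory Defs
  imports "HOL-Analysis.Analysis"
begin

definition sphere_cone :: "'a::euclidean_space set \<Rightarrow> 'a set" where
  "sphere_cone A = {t *\<^sub>R x | t x. 0 < t \<and> t \<le> 1 \<and> x \<in> A}"

text \<open>Standard surface measure on the unit sphere of a Euclidean space of dimension d: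
  sigma(A) = d * Lebesgue measure of the cone over A (the cone-measure formula).\<close>
definition sphere_measurable :: "'a::euclidean_space set \<Rightarrow> bool" where
  "sphere_measurable A \<longleftrightarrow> A \<subseteq> sphere 0 1 \<and> sphere_cone A \<in> sets lebesgue"

definition surf_measure :: "'a::euclidean_space set \<Rightarrow> real" where
  "surf_measure A = real DIM('a) * measure lebesgue (sphere_cone A)"

definition open_hemisphere :: "'a::euclidean_space \<Rightarrow> 'a set" where
  "open_hemisphere c = {x \<in> sphere 0 1. x \<bullet> c > 0}"

definition sph_ball :: "'a::euclidean_space \<Rightarrow> real \<Rightarrow> 'a set" where
  "sph_ball c r = {x \<in> sphere 0 1. arccos (x \<bullet> c) < r}"

text \<open>Star-shaped w.r.t. c on the sphere: the shortest great-circle arc from c to any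
  x in T lies in T (for x not antipodal to c it is the normalized segment).\<close>
definition sph_star_shaped :: "'a::euclidean_space \<Rightarrow> 'a set \<Rightarrow> bool" where
  "sph_star_shaped c T \<longleftrightarrow>
     (\<forall>x\<in>T. \<forall>t\<in>{0..1::real}.
        (1 / norm ((1 - t) *\<^sub>R c + t *\<^sub>R x)) *\<^sub>R ((1 - t) *\<^sub>R c + t *\<^sub>R x) \<in> T)"

end

theory Submission
  imports Defs
begin

text \<open>
  The surface measure of A is d times the Lebesgue measure of the truncated cone K(A) over A
  (d the dimension), so the claim is an inequality between volumes of truncated cones.  Slice
  them by the height y . c.  Inside the slab of heights (a, b] the cone K(A) lies between the
  "pyramids" over A (the cone over A below height 1, within a circular cone around c) whose
  slopes are those of the circular cones through the unit sphere at heights b and a.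
  Stretching the directions orthogonal to c by a factor l maps the pyramid of slope rho over a
  star-shaped T into the one of slope l rho and scales volumes by l^(d-1); for the hemisphere H
  the image is exactly the pyramid of slope l rho.  Hence the ratio of the pyramid volumes of T
  and H decreases with the slope.  A Riemann sum comparison over thin slabs then shows: above
  height cos r, where all slopes are at most tan r, K(T) is relatively at least as large as this
  ratio at tan r, and below cos r at most as large.  As K(B \<inter> T) is the pyramid of slope tan r
  below height cos r and K(T) above it, the ball part of T is relatively at least, and the rest
  of T at most, as large as the hemisphere parts; elementary algebra gives the theorem.
\<close>

section \<open>Lebesgue measure of a stretch along a direction\<close>

text \<open>The index type of the basis of a Euclidean space; it identifies the space with
  real^('a coord), where the change-of-variables theory of the library is available.\<close>
typedef (overloaded) ('a::euclidean_space) coord = "Basis :: 'a set"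
  using nonempty_Basis by blast

instance coord :: (euclidean_space) finite
proof
  have "(UNIV :: 'a coord set) = Abs_coord ` Basis"
    using type_definition.Abs_image[OF type_definition_coord] by (rule sym)
  then show "finite (UNIV :: 'a coord set)" by (metis finite_Basis finite_imageI)
qed

instantiation coord :: (euclidean_space) linorder
begin
definition less_eq_coord :: "'a coord \<Rightarrow> 'a coord \<Rightarrow> bool" where
  "less_eq_coord x y \<longleftrightarrow> to_nat x \<le> to_nat y"
definition less_coord :: "'a coord \<Rightarrow> 'a coord \<Rightarrow> bool" where
  "less_coord x y \<longleftrightarrow> to_nat x < to_nat y"
instance
  by standard (auto simp: less_eq_coord_def less_coord_def)
end

instance coord :: (euclidean_space) wellorder
proof
  fix P :: "'a coord \<Rightarrow> bool" and a
  assume H: "\<And>x. (\<And>y. y < x \<Longrightarrow> P y) \<Longrightarrow> P x"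
  have "\<forall>x. to_nat x = n \<longrightarrow> P x" for n
  proof (induction n rule: less_induct)
    case (less n)
    then show ?case using H by (auto simp: less_coord_def)
  qed
  then show "P a" by blast
qed

lemma bij_Rep_coord: "bij_betw Rep_coord (UNIV :: 'a::euclidean_space coord set) Basis"
  unfolding bij_betw_def inj_on_def
  using Rep_coord Rep_coord_inject type_definition.Rep_range[OF type_definition_coord] by auto

lemma card_coord: "CARD('a::euclidean_space coord) = DIM('a)"
  using bij_Rep_coord bij_betw_same_card by blast

definition to_vec :: "'a::euclidean_space \<Rightarrow> real^('a coord)" where
  "to_vec x = (\<chi> i. x \<bullet> Rep_coord i)"

definition of_vec :: "real^('a::euclidean_space coord) \<Rightarrow> 'a" where
  "of_vec v = (\<Sum>i\<in>UNIV. (v $ i) *\<^sub>R Rep_coord i)"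

lemma sum_coord: "(\<Sum>i\<in>UNIV. f (Rep_coord i)) = (\<Sum>b\<in>(Basis::'a::euclidean_space set). f b)"
  using sum.reindex_bij_betw[OF bij_Rep_coord] by blast

lemma prod_coord: "(\<Prod>i\<in>UNIV. f (Rep_coord i)) = (\<Prod>b\<in>(Basis::'a::euclidean_space set). f b)"
  using prod.reindex_bij_betw[OF bij_Rep_coord] by blast

lemma of_vec_to_vec: "of_vec (to_vec x) = x"
  unfolding of_vec_def to_vec_def using sum_coord[of "\<lambda>b. (x \<bullet> b) *\<^sub>R b"]
  by (simp add: euclidean_representation)

lemma inner_Rep_coord: "Rep_coord i \<bullet> Rep_coord j = (if i = j then 1 else 0)"
  using Rep_coord[of i] Rep_coord[of j] Rep_coord_inject[of i j] by (auto simp: inner_Basis)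

lemma of_vec_inner: "of_vec v \<bullet> Rep_coord j = v $ j"
proof -
  have "of_vec v \<bullet> Rep_coord j = (\<Sum>i\<in>UNIV. v $ i * (Rep_coord i \<bullet> Rep_coord j))"
    unfolding of_vec_def by (simp add: inner_sum_left)
  also have "\<dots> = (\<Sum>i\<in>UNIV. if i = j then v $ i else 0)"
    by (intro sum.cong) (auto simp: inner_Rep_coord)
  also have "\<dots> = v $ j" by simp
  finally show ?thesis .
qed

lemma of_vec_inner_Basis: "b \<in> Basis \<Longrightarrow> of_vec v \<bullet> b = v $ Abs_coord b"
  by (metis Abs_coord_inverse of_vec_inner)

lemma to_vec_of_vec: "to_vec (of_vec v) = v"
  unfolding to_vec_def by (simp add: of_vec_inner vec_eq_iff)

lemma linear_to_vec: "linear to_vec"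
  unfolding to_vec_def by (rule linearI) (simp_all add: vec_eq_iff inner_add_left)

lemma linear_of_vec: "linear of_vec"
  unfolding of_vec_def by (rule linearI) (simp_all add: scaleR_add_left sum.distrib scaleR_sum_right)

lemma to_vec_inner: "to_vec x \<bullet> to_vec y = x \<bullet> y"
proof -
  have "to_vec x \<bullet> to_vec y = (\<Sum>i\<in>UNIV. (x \<bullet> Rep_coord i) * (y \<bullet> Rep_coord i))"
    unfolding to_vec_def inner_vec_def by simp
  also have "\<dots> = x \<bullet> y" using sum_coord[of "\<lambda>b. (x \<bullet> b) * (y \<bullet> b)"]
    by (metis euclidean_inner)
  finally show ?thesis .
qed

lemma Basis_vec_real: "(Basis :: (real^'n) set) = range (\<lambda>i. axis i 1)"
  unfolding Basis_vec_def by auto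

lemma prod_Basis_vec: "(\<Prod>b\<in>(Basis::(real^'n) set). f b) = (\<Prod>i\<in>UNIV. f (axis i 1))"
proof -
  have "inj (\<lambda>i::'n. axis i (1::real))" by (auto simp: inj_on_def axis_eq_axis)
  then show ?thesis unfolding Basis_vec_real by (simp add: prod.reindex)
qed

lemma continuous_to_vec: "continuous_on UNIV to_vec"
  using linear_to_vec linear_conv_bounded_linear linear_continuous_on by blast

lemma continuous_of_vec: "continuous_on UNIV of_vec"
  using linear_of_vec linear_conv_bounded_linear linear_continuous_on by blast

lemma to_vec_measurable[measurable]: "to_vec \<in> borel_measurable borel"
  using continuous_to_vec by (rule borel_measurable_continuous_onI)

lemma of_vec_measurable[measurable]: "of_vec \<in> borel_measurable borel"
  using continuous_of_vec by (rule borel_measurable_continuous_onI)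

lemma to_vec_nth: "to_vec x $ i = x \<bullet> Rep_coord i"
  by (simp add: to_vec_def)

text \<open>The coordinate map and its inverse are measure preserving: they carry boxes to boxes
  of the same volume.\<close>
lemma lborel_to_vec: "lborel = distr (lborel :: 'a::euclidean_space measure) borel to_vec"
proof (rule lborel_eqI)
  fix l u :: "real^('a coord)"
  assume le: "\<And>b. b \<in> Basis \<Longrightarrow> l \<bullet> b \<le> u \<bullet> b"
  have le': "l $ i \<le> u $ i" for i using le[of "axis i 1"] by (simp add: inner_axis)
  have eq: "to_vec -` box l u = box (of_vec l) (of_vec u)"
  proof -
    have "x \<in> box (of_vec l) (of_vec u) \<longleftrightarrow> (\<forall>i. l $ i < x \<bullet> Rep_coord i \<and> x \<bullet> Rep_coord i < u $ i)" for x
    proof -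
      have "x \<in> box (of_vec l) (of_vec u) \<longleftrightarrow> (\<forall>b\<in>Basis. of_vec l \<bullet> b < x \<bullet> b \<and> x \<bullet> b < of_vec u \<bullet> b)"
        by (simp add: mem_box)
      also have "\<dots> \<longleftrightarrow> (\<forall>i. of_vec l \<bullet> Rep_coord i < x \<bullet> Rep_coord i \<and> x \<bullet> Rep_coord i < of_vec u \<bullet> Rep_coord i)"
        using bij_Rep_coord by (metis (no_types, lifting) Rep_coord type_definition.Rep_range[OF type_definition_coord] imageE)
      finally show ?thesis by (simp add: of_vec_inner)
    qed
    moreover have "to_vec x \<in> box l u \<longleftrightarrow> (\<forall>i. l $ i < x \<bullet> Rep_coord i \<and> x \<bullet> Rep_coord i < u $ i)" for x
      by (simp add: mem_box Basis_vec_real inner_axis to_vec_nth)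
    ultimately show ?thesis by auto
  qed
  have "emeasure (distr lborel borel to_vec) (box l u) = emeasure lborel (box (of_vec l) (of_vec u))"
    by (subst emeasure_distr) (auto simp: eq)
  also have "\<dots> = (\<Prod>b\<in>Basis. (of_vec u - of_vec l) \<bullet> b)"
    using le' by (subst emeasure_lborel_box_eq) (auto simp: inner_diff_left of_vec_inner_Basis)
  also have "\<dots> = (\<Prod>i\<in>UNIV. (of_vec u - of_vec l) \<bullet> Rep_coord i)"
    using prod_coord[of "\<lambda>b. (of_vec u - of_vec l) \<bullet> b"] by simp
  also have "\<dots> = (\<Prod>b\<in>Basis. (u - l) \<bullet> b)"
    by (simp add: prod_Basis_vec inner_diff_left of_vec_inner inner_axis)
  finally show "emeasure (distr lborel borel to_vec) (box l u) = (\<Prod>b\<in>Basis. (u - l) \<bullet> b)" .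
qed simp

lemma lborel_of_vec: "lborel = distr (lborel :: (real^('a::euclidean_space coord)) measure) borel of_vec"
proof -
  have "distr (lborel :: (real^('a coord)) measure) borel of_vec
      = distr (distr (lborel :: 'a measure) borel to_vec) borel of_vec"
    by (simp only: lborel_to_vec[symmetric])
  also have "\<dots> = distr lborel borel (of_vec \<circ> to_vec)"
    by (intro distr_distr) simp_all
  also have "\<dots> = distr lborel lborel (\<lambda>x. x)"
    by (rule distr_cong) (simp_all add: of_vec_to_vec)
  finally show ?thesis by (simp add: distr_id)
qed

lemma lebesgue_transfer:
  fixes X :: "'a::euclidean_space \<Rightarrow> 'b::euclidean_space"
  assumes Xm: "X \<in> borel_measurable borel" and lb: "lborel = distr (lborel::'a measure) borel X"
  shows "lebesgue = distr (lebesgue::'a measure) lebesgue X"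
    and "X \<in> (lebesgue::'a measure) \<rightarrow>\<^sub>M lebesgue"
proof -
  have d1: "distr (lebesgue::'a measure) lborel X = lborel"
  proof -
    have "distr (lebesgue::'a measure) lborel X = distr lborel lborel X"
      by (rule distr_completion) (use Xm in simp)
    also have "\<dots> = distr lborel borel X"
      by (rule distr_cong) auto
    finally show ?thesis using lb by simp
  qed
  have Xc: "X \<in> (lebesgue::'a measure) \<rightarrow>\<^sub>M lborel"
    using Xm by (simp add: measurable_completion)
  have "completion (distr (lebesgue::'a measure) lborel X) = distr lebesgue (completion lborel) X"
    by (rule completion.completion_distr_eq[OF Xc]) (simp add: d1)
  then show "lebesgue = distr (lebesgue::'a measure) lebesgue X" using d1 by simp
  show "X \<in> (lebesgue::'a measure) \<rightarrow>\<^sub>M lebesgue"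
    by (rule completion.measurable_completion2[OF Xc]) (simp add: d1)
qed

lemma of_vec_image_vimage: "of_vec ` F = to_vec -` F"
  by (auto simp: to_vec_of_vec of_vec_to_vec) (metis of_vec_to_vec image_eqI)

lemma to_vec_image_vimage: "to_vec ` E = of_vec -` E"
  by (auto simp: to_vec_of_vec of_vec_to_vec) (metis to_vec_of_vec image_eqI)

lemma lmeasurable_preimage:
  fixes X :: "'a::euclidean_space \<Rightarrow> 'b::euclidean_space"
  assumes X: "X \<in> borel_measurable borel" and push: "lborel = distr (lborel::'a measure) borel X"
    and S: "S \<in> lmeasurable"
  shows "X -` S \<in> lmeasurable" "measure lebesgue (X -` S) = measure lebesgue S"
proof -
  note tr = lebesgue_transfer[OF X push]
  have Sl: "S \<in> sets lebesgue" using S by (rule fmeasurableD)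
  have pre: "X -` S \<in> sets lebesgue"
    using measurable_sets[OF tr(2) Sl] by simp
  have "emeasure lebesgue S = emeasure (distr (lebesgue::'a measure) lebesgue X) S"
    using tr(1) by metis
  also have "\<dots> = emeasure lebesgue (X -` S)"
    using emeasure_distr[OF tr(2) Sl] by simp
  finally have eq: "emeasure lebesgue (X -` S) = emeasure lebesgue S" by simp
  then show "X -` S \<in> lmeasurable" "measure lebesgue (X -` S) = measure lebesgue S"
    using S pre by (auto simp: fmeasurable_def measure_def)
qed

definition stretch :: "'a::real_inner \<Rightarrow> real \<Rightarrow> 'a \<Rightarrow> 'a" where
  "stretch c l y = l *\<^sub>R y + ((1 - l) * (y \<bullet> c)) *\<^sub>R c"

lemma det_axis_stretch:
  fixes k :: "'n::finite"
  shows "det (matrix (\<lambda>z::real^'n. l *\<^sub>R z + ((1 - l) * z $ k) *\<^sub>R axis k 1)) = l ^ (CARD('n) - 1)"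
proof -
  let ?D = "\<lambda>z::real^'n. l *\<^sub>R z + ((1 - l) * z $ k) *\<^sub>R axis k 1"
  have md: "matrix ?D $ i $ j = (if i = j then (if i = k then 1 else l) else 0)" for i j
    by (auto simp: matrix_def axis_def)
  then have "det (matrix ?D) = (\<Prod>i\<in>UNIV. matrix ?D $ i $ i)"
    by (intro det_diagonal) simp
  also have "\<dots> = (\<Prod>i\<in>UNIV. if i = k then 1 else l)"
    by (simp add: md)
  also have "\<dots> = (if k = k then 1 else l) * (\<Prod>i\<in>UNIV - {k}. if i = k then 1 else l)"
    by (rule prod.remove) auto
  also have "(\<Prod>i\<in>UNIV - {k}. if i = k then 1 else l) = (\<Prod>i\<in>UNIV - {k}. l)"
    by (rule prod.cong) auto
  finally show ?thesis by (simp add: card_Diff_singleton)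
qed

text \<open>In coordinates, after rotating c onto a coordinate axis, the stretch becomes diagonal
  with determinant l^(n-1).\<close>
lemma stretch_vec:
  fixes c :: "real^'n::{finite,wellorder}"
  assumes c: "norm c = 1" and l: "l > 0" and S: "S \<in> lmeasurable"
  shows "stretch c l ` S \<in> lmeasurable"
    "measure lebesgue (stretch c l ` S) = l ^ (CARD('n) - 1) * measure lebesgue S"
proof -
  fix k :: 'n
  have nc: "norm c = norm (axis k (1::real))" using c by simp
  obtain g where g: "orthogonal_transformation g" "g c = axis k (1::real)"
    using orthogonal_transformation_exists[OF nc] by blast
  define g' where "g' = inv g"
  have g': "orthogonal_transformation g'" unfolding g'_def by (rule orthogonal_transformation_inv[OF g(1)])
  have gg: "g' (g y) = y" for y unfolding g'_def by (rule inv_f_f[OF orthogonal_transformation_inj[OF g(1)]])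
  have g'k: "g' (axis k 1) = c" using gg[of c] g(2) by simp
  define D where "D = (\<lambda>z. l *\<^sub>R z + ((1 - l) * z $ k) *\<^sub>R axis k (1::real))"
  have linD: "linear D" unfolding D_def by (rule linearI) (auto simp: algebra_simps)
  have gk: "g y $ k = y \<bullet> c" for y
    using g unfolding orthogonal_transformation_def by (metis cart_eq_inner_axis)
  have eqf: "stretch c l y = g' (D (g y))" for y
  proof -
    have "g' (D (g y)) = l *\<^sub>R g' (g y) + ((1 - l) * g y $ k) *\<^sub>R g' (axis k 1)"
      unfolding D_def using orthogonal_transformation_linear[OF g']
      by (simp add: linear_add linear_scale)
    then show ?thesis by (simp add: gg g'k gk stretch_def)
  qed
  have img: "stretch c l ` S = g' ` (D ` (g ` S))"
    unfolding image_image by (simp add: eqf)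
  have m1: "g ` S \<in> lmeasurable" "measure lebesgue (g ` S) = measure lebesgue S"
    using measurable_orthogonal_image[OF g(1) S] measure_orthogonal_image[OF g(1) S] by auto
  have m2: "D ` (g ` S) \<in> lmeasurable" "measure lebesgue (D ` (g ` S)) = \<bar>det (matrix D)\<bar> * measure lebesgue (g ` S)"
    using measurable_linear_image[OF linD m1(1)] measure_linear_image[OF linD m1(1)] by auto
  have m3: "g' ` (D ` (g ` S)) \<in> lmeasurable" "measure lebesgue (g' ` (D ` (g ` S))) = measure lebesgue (D ` (g ` S))"
    using measurable_orthogonal_image[OF g' m2(1)] measure_orthogonal_image[OF g' m2(1)] by auto
  have detD: "det (matrix D) = l ^ (CARD('n) - 1)"
    unfolding D_def by (rule det_axis_stretch)
  show "stretch c l ` S \<in> lmeasurable" using img m3 by simp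
  show "measure lebesgue (stretch c l ` S) = l ^ (CARD('n) - 1) * measure lebesgue S"
    using img m1 m2 m3 detD l by simp
qed

text \<open>The same in an arbitrary Euclidean space, via the measure preserving coordinate map.\<close>
theorem stretch_measure:
  fixes c :: "'a::euclidean_space"
  assumes c: "norm c = 1" and l: "l > 0" and S: "S \<in> lmeasurable"
  shows "stretch c l ` S \<in> lmeasurable"
    "measure lebesgue (stretch c l ` S) = l ^ (DIM('a) - 1) * measure lebesgue S"
proof -
  have "to_vec (stretch c l y) = stretch (to_vec c) l (to_vec y)" for y
    unfolding stretch_def
    by (simp add: linear_add[OF linear_to_vec] linear_scale[OF linear_to_vec] to_vec_inner)
  then have "stretch c l y = of_vec (stretch (to_vec c) l (to_vec y))" for y
    by (metis of_vec_to_vec)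
  then have img: "stretch c l ` S = of_vec ` (stretch (to_vec c) l ` (to_vec ` S))"
    unfolding image_image by simp
  have nc: "norm (to_vec c) = 1" using c by (simp add: norm_eq_sqrt_inner to_vec_inner)
  note vS = lmeasurable_preimage[OF of_vec_measurable lborel_of_vec S, folded to_vec_image_vimage]
  note svS = stretch_vec[OF nc l vS(1)]
  note osvS = lmeasurable_preimage[OF to_vec_measurable lborel_to_vec svS(1), folded of_vec_image_vimage]
  show "stretch c l ` S \<in> lmeasurable"
    unfolding img by (rule osvS(1))
  show "measure lebesgue (stretch c l ` S) = l ^ (DIM('a) - 1) * measure lebesgue S"
    unfolding img osvS(2) svS(2) vS(2) card_coord ..
qed

section \<open>Cones, pyramids and slabs\<close>

definition dir :: "'a::real_normed_vector \<Rightarrow> 'a" where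
  "dir y = (1 / norm y) *\<^sub>R y"

definition ray_cone :: "'a::real_normed_vector set \<Rightarrow> 'a set" where
  "ray_cone A = {y. y \<noteq> 0 \<and> dir y \<in> A}"

definition perp :: "'a::real_inner \<Rightarrow> 'a \<Rightarrow> 'a" where
  "perp c y = y - (y \<bullet> c) *\<^sub>R c"

text \<open>Its measure is the
  (suitably normalised) area of the central projection of A onto that hyperplane intersected
  with the disc of radius rho.\<close>
definition pyramid :: "'a::real_inner \<Rightarrow> 'a set \<Rightarrow> real \<Rightarrow> 'a set" where
  "pyramid c A \<rho> = {y \<in> ray_cone A. y \<bullet> c \<le> 1 \<and> norm (perp c y) < \<rho> * (y \<bullet> c)}"

definition pyr_vol :: "'a::euclidean_space \<Rightarrow> 'a set \<Rightarrow> real \<Rightarrow> real" where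
  "pyr_vol c A \<rho> = measure lebesgue (pyramid c A \<rho>)"

definition slab :: "'a::real_inner \<Rightarrow> real \<Rightarrow> real \<Rightarrow> 'a set" where
  "slab c a b = {y. a < y \<bullet> c \<and> y \<bullet> c \<le> b}"

lemma dir_scale: "k > 0 \<Longrightarrow> dir (k *\<^sub>R y) = dir y"
  by (simp add: dir_def)

lemma norm_dir: "y \<noteq> 0 \<Longrightarrow> norm (dir y) = 1"
  by (simp add: dir_def)

lemma dir_sphere: "norm x = 1 \<Longrightarrow> dir x = x"
  by (simp add: dir_def)

lemma dir_decomp: "y = norm y *\<^sub>R dir y"
  by (cases "y = 0") (auto simp: dir_def)

lemma ray_cone_scale: "k > 0 \<Longrightarrow> k *\<^sub>R y \<in> ray_cone A \<longleftrightarrow> y \<in> ray_cone A"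
  by (simp add: ray_cone_def dir_scale)

lemma sphere_cone_eq:
  assumes "A \<subseteq> sphere 0 1"
  shows "sphere_cone A = ray_cone A \<inter> cball 0 1"
proof
  show "sphere_cone A \<subseteq> ray_cone A \<inter> cball 0 1"
  proof
    fix y assume "y \<in> sphere_cone A"
    then obtain t x where y: "y = t *\<^sub>R x" "0 < t" "t \<le> 1" "x \<in> A" by (auto simp: sphere_cone_def)
    have nx: "norm x = 1" using assms y(4) by auto
    show "y \<in> ray_cone A \<inter> cball 0 1"
      using y nx by (auto simp: ray_cone_def dir_scale dir_sphere)
  qed
  show "ray_cone A \<inter> cball 0 1 \<subseteq> sphere_cone A"
  proof
    fix y assume "y \<in> ray_cone A \<inter> cball 0 1"
    then have y: "y \<noteq> 0" "dir y \<in> A" "norm y \<le> 1" by (auto simp: ray_cone_def)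
    then show "y \<in> sphere_cone A"
      unfolding sphere_cone_def using dir_decomp[of y] by (intro CollectI exI[of _ "norm y"] exI[of _ "dir y"]) auto
  qed
qed

lemma sphere_cone_lmeasurable:
  assumes "A \<subseteq> sphere 0 1" "sphere_cone A \<in> sets lebesgue"
  shows "sphere_cone (A :: 'a::euclidean_space set) \<in> lmeasurable"
proof -
  have "sphere_cone A \<subseteq> cball 0 1" using sphere_cone_eq[OF assms(1)] by auto
  then show ?thesis using assms(2) bounded_set_imp_lmeasurable bounded_subset[OF bounded_cball] by blast
qed

lemma scale_image_lebesgue:
  assumes "E \<in> sets lebesgue" "M \<noteq> 0"
  shows "(\<lambda>y. M *\<^sub>R y) ` E \<in> sets (lebesgue :: 'a::euclidean_space measure)"
proof -
  have "(\<lambda>y. M *\<^sub>R y) ` E = (\<lambda>y. (1/M) *\<^sub>R y) -` E \<inter> space lebesgue"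
  proof
    show "(\<lambda>y. M *\<^sub>R y) ` E \<subseteq> (\<lambda>y. (1/M) *\<^sub>R y) -` E \<inter> space lebesgue"
      using assms(2) by auto
    show "(\<lambda>y. (1/M) *\<^sub>R y) -` E \<inter> space lebesgue \<subseteq> (\<lambda>y. M *\<^sub>R y) ` E"
    proof
      fix x assume "x \<in> (\<lambda>y. (1/M) *\<^sub>R y) -` E \<inter> space lebesgue"
      then have "(1/M) *\<^sub>R x \<in> E" by simp
      moreover have "x = M *\<^sub>R ((1/M) *\<^sub>R x)" using assms(2) by simp
      ultimately show "x \<in> (\<lambda>y. M *\<^sub>R y) ` E" by blast
    qed
  qed
  also have "\<dots> \<in> sets lebesgue"
    by (rule measurable_sets[OF lebesgue_measurable_scaling assms(1)])
  finally show ?thesis .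
qed

lemma scale_ray_cone_cball:
  assumes "M > 0"
  shows "(\<lambda>y. M *\<^sub>R y) ` (ray_cone A \<inter> cball 0 1) = ray_cone A \<inter> cball 0 M"
proof
  show "(\<lambda>y. M *\<^sub>R y) ` (ray_cone A \<inter> cball 0 1) \<subseteq> ray_cone A \<inter> cball 0 M"
    using assms by (auto simp: ray_cone_scale)
  show "ray_cone A \<inter> cball 0 M \<subseteq> (\<lambda>y. M *\<^sub>R y) ` (ray_cone A \<inter> cball 0 1)"
  proof
    fix z assume z: "z \<in> ray_cone A \<inter> cball 0 M"
    have "(1/M) *\<^sub>R z \<in> ray_cone A \<inter> cball 0 1"
      using z assms by (auto simp: ray_cone_scale)
    moreover have "z = M *\<^sub>R ((1/M) *\<^sub>R z)" using assms by simp
    ultimately show "z \<in> (\<lambda>y. M *\<^sub>R y) ` (ray_cone A \<inter> cball 0 1)" by blast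
  qed
qed

lemma ray_cone_cball_lebesgue:
  assumes "A \<subseteq> sphere 0 1" "sphere_cone A \<in> sets lebesgue" "M > 0"
  shows "ray_cone A \<inter> cball 0 M \<in> sets (lebesgue :: 'a::euclidean_space measure)"
proof -
  have "ray_cone A \<inter> cball 0 M = (\<lambda>y. M *\<^sub>R y) ` sphere_cone A"
    using scale_ray_cone_cball[OF assms(3), of A] sphere_cone_eq[OF assms(1)] by simp
  then show ?thesis using scale_image_lebesgue[OF assms(2)] assms(3) by simp
qed

lemma ray_cone_hemi:
  assumes c: "norm c = 1"
  shows "ray_cone (open_hemisphere c) = {y. y \<bullet> c > 0}"
proof -
  have "y \<noteq> 0 \<and> dir y \<in> open_hemisphere c \<longleftrightarrow> y \<bullet> c > 0" for y
  proof (cases "y = 0")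
    case False
    then have "norm (dir y) = 1" by (rule norm_dir)
    moreover have "dir y \<bullet> c = (y \<bullet> c) / norm y" by (simp add: dir_def)
    ultimately show ?thesis using False by (auto simp: open_hemisphere_def divide_pos_pos zero_less_divide_iff)
  qed simp
  then show ?thesis by (auto simp: ray_cone_def)
qed

lemma sphere_cone_hemi:
  fixes c :: "'a::euclidean_space"
  assumes c: "norm c = 1"
  shows "sphere_cone (open_hemisphere c) = {y. y \<bullet> c > 0} \<inter> cball 0 1"
    and "sphere_cone (open_hemisphere c) \<in> sets lebesgue"
proof -
  have sub: "open_hemisphere c \<subseteq> sphere 0 1" by (auto simp: open_hemisphere_def)
  show e: "sphere_cone (open_hemisphere c) = {y. y \<bullet> c > 0} \<inter> cball 0 1"
    using sphere_cone_eq[OF sub] ray_cone_hemi[OF c] by simp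
  have "open {y::'a. y \<bullet> c > 0}" using open_halfspace_gt[of 0 c] by (simp add: inner_commute)
  then have "{y::'a. y \<bullet> c > 0} \<inter> cball 0 1 \<in> sets borel" by (intro sets.Int borel_open borel_closed) auto
  then show "sphere_cone (open_hemisphere c) \<in> sets lebesgue"
    unfolding e by (metis sets_completionI_sets sets_lborel)
qed

lemma norm_perp_sq:
  assumes "norm c = 1"
  shows "(norm (perp c y))\<^sup>2 = (norm y)\<^sup>2 - (y \<bullet> c)\<^sup>2"
proof -
  have cc: "c \<bullet> c = 1" using assms by (simp add: norm_eq_1)
  show ?thesis
    unfolding perp_def power2_norm_eq_inner
    by (simp add: inner_diff_left inner_diff_right cc inner_commute power2_eq_square)
qed

lemma norm_le_perp:
  assumes "norm c = 1"
  shows "norm y \<le> \<bar>y \<bullet> c\<bar> + norm (perp c y)"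
proof -
  have "y = (y \<bullet> c) *\<^sub>R c + perp c y" by (simp add: perp_def)
  then have "norm y \<le> norm ((y \<bullet> c) *\<^sub>R c) + norm (perp c y)"
    by (metis norm_triangle_ineq)
  then show ?thesis using assms by simp
qed

lemma norm_perp_le: "norm c = 1 \<Longrightarrow> norm (perp c y) \<le> norm y"
proof -
  assume c: "norm c = 1"
  have "(norm (perp c y))\<^sup>2 \<le> (norm y)\<^sup>2" using norm_perp_sq[OF c, of y] by simp
  then show ?thesis by (simp add: power_mono_iff[symmetric])
qed

lemma perp_scale: "perp c (k *\<^sub>R y) = k *\<^sub>R perp c y"
  by (simp add: perp_def algebra_simps)

lemma halfspace_le_lebesgue: "{y::'a::euclidean_space. y \<bullet> c \<le> t} \<in> sets lebesgue"
proof -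
  have "closed {y::'a. y \<bullet> c \<le> t}" using closed_halfspace_le[of c t] by (simp add: inner_commute)
  then show ?thesis by (metis borel_closed sets_completionI_sets sets_lborel)
qed

lemma halfspace_gt_lebesgue: "{y::'a::euclidean_space. y \<bullet> c > t} \<in> sets lebesgue"
proof -
  have "open {y::'a. y \<bullet> c > t}" using open_halfspace_gt[of t c] by (simp add: inner_commute)
  then show ?thesis by (metis borel_open sets_completionI_sets sets_lborel)
qed

lemma slab_lebesgue: "slab c a b \<in> sets (lebesgue :: 'a::euclidean_space measure)"
proof -
  have "slab c a b = {y::'a. y \<bullet> c > a} \<inter> {y. y \<bullet> c \<le> b}" by (auto simp: slab_def)
  then show ?thesis using halfspace_le_lebesgue halfspace_gt_lebesgue by (metis sets.Int)
qed

lemma borel_pyramid_cond: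
  "{y::'a::euclidean_space. y \<bullet> c \<le> 1 \<and> norm (perp c y) < \<rho> * (y \<bullet> c)} \<in> sets borel"
proof -
  have "{y::'a. y \<bullet> c \<le> 1 \<and> norm (perp c y) < \<rho> * (y \<bullet> c)} = {y. y \<bullet> c \<le> 1} \<inter> {y. norm (perp c y) < \<rho> * (y \<bullet> c)}"
    by auto
  moreover have cl: "closed {y::'a. y \<bullet> c \<le> 1}"
    using closed_halfspace_le[of c 1] by (simp add: inner_commute)
  moreover have op: "open {y::'a. norm (perp c y) < \<rho> * (y \<bullet> c)}"
    unfolding perp_def by (intro open_Collect_less continuous_intros)
  ultimately show ?thesis using sets.Int[OF borel_closed[OF cl] borel_open[OF op]] by simp
qed

lemma pyramid_pos:
  assumes "y \<in> pyramid c A \<rho>" "\<rho> \<ge> 0"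
  shows "y \<bullet> c > 0"
proof (rule ccontr)
  assume "\<not> y \<bullet> c > 0"
  then have "\<rho> * (y \<bullet> c) \<le> 0" using assms(2) by (simp add: mult_nonneg_nonpos)
  then show False using assms(1) norm_ge_zero[of "perp c y"] by (auto simp: pyramid_def)
qed

lemma pyramid_lmeasurable:
  fixes c :: "'a::euclidean_space"
  assumes c: "norm c = 1" and A: "A \<subseteq> sphere 0 1" "sphere_cone A \<in> sets lebesgue" and r: "\<rho> \<ge> 0"
  shows "pyramid c A \<rho> \<in> lmeasurable"
proof -
  have sub: "pyramid c A \<rho> \<subseteq> cball 0 (1 + \<rho>)"
  proof
    fix y assume y: "y \<in> pyramid c A \<rho>"
    then have s1: "y \<bullet> c \<le> 1" and w: "norm (perp c y) < \<rho> * (y \<bullet> c)" by (auto simp: pyramid_def)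
    have s0: "y \<bullet> c > 0" using pyramid_pos[OF y r] .
    have "\<rho> * (y \<bullet> c) \<le> \<rho>" using s1 r by (simp add: mult_left_le)
    then show "y \<in> cball 0 (1 + \<rho>)" using norm_le_perp[OF c, of y] s0 s1 w by simp
  qed
  have eq: "pyramid c A \<rho> = (ray_cone A \<inter> cball 0 (1 + \<rho>)) \<inter> {y. y \<bullet> c \<le> 1 \<and> norm (perp c y) < \<rho> * (y \<bullet> c)}"
    using sub by (auto simp: pyramid_def)
  have b: "{y. y \<bullet> c \<le> 1 \<and> norm (perp c y) < \<rho> * (y \<bullet> c)} \<in> sets lebesgue"
    using borel_pyramid_cond[of c \<rho>] by (metis sets_completionI_sets sets_lborel)
  have "pyramid c A \<rho> \<in> sets lebesgue"
    unfolding eq using ray_cone_cball_lebesgue[OF A, of "1 + \<rho>"] r b by (metis sets.Int add_pos_nonneg zero_less_one)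
  then show ?thesis
    by (rule bounded_set_imp_lmeasurable[OF bounded_subset[OF bounded_cball sub]])
qed

lemma pyramid_zero: "pyramid c A 0 = {}"
  by (auto simp: pyramid_def)

text \<open>Cutting a pyramid at height b is the same as shrinking it by the factor b; hence
  the part of a pyramid in the slab (a, b] has measure (b^d - a^d) times that of the pyramid.\<close>

lemma pyramid_scale:
  assumes b: "0 < b" "b \<le> 1"
  shows "(\<lambda>y. b *\<^sub>R y) ` pyramid c A \<rho> = pyramid c A \<rho> \<inter> {y. y \<bullet> c \<le> b}"
proof
  show "(\<lambda>y. b *\<^sub>R y) ` pyramid c A \<rho> \<subseteq> pyramid c A \<rho> \<inter> {y. y \<bullet> c \<le> b}"
  proof
    fix z assume "z \<in> (\<lambda>y. b *\<^sub>R y) ` pyramid c A \<rho>"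
    then obtain y where z: "z = b *\<^sub>R y" and y: "y \<in> pyramid c A \<rho>" by auto
    have y1: "y \<in> ray_cone A" "y \<bullet> c \<le> 1" "norm (perp c y) < \<rho> * (y \<bullet> c)" using y by (auto simp: pyramid_def)
    have "b * (y \<bullet> c) \<le> b" using y1(2) b by (simp add: mult_left_le)
    then have "b * (y \<bullet> c) \<le> 1" using b by linarith
    moreover have "b * norm (perp c y) < b * (\<rho> * (y \<bullet> c))" using y1(3) b by simp
    ultimately show "z \<in> pyramid c A \<rho> \<inter> {y. y \<bullet> c \<le> b}"
      using y1 b by (auto simp: z pyramid_def ray_cone_scale perp_scale algebra_simps)
  qed
  show "pyramid c A \<rho> \<inter> {y. y \<bullet> c \<le> b} \<subseteq> (\<lambda>y. b *\<^sub>R y) ` pyramid c A \<rho>"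
  proof
    fix z assume z: "z \<in> pyramid c A \<rho> \<inter> {y. y \<bullet> c \<le> b}"
    have z1: "z \<in> ray_cone A" "z \<bullet> c \<le> b" "norm (perp c z) < \<rho> * (z \<bullet> c)" using z by (auto simp: pyramid_def)
    have "(1/b) * (z \<bullet> c) \<le> 1" using z1(2) b by (simp add: field_simps)
    moreover have "norm (perp c z) / b < (\<rho> * (z \<bullet> c)) / b"
      by (rule divide_strict_right_mono[OF z1(3) b(1)])
    ultimately have "(1/b) *\<^sub>R z \<in> pyramid c A \<rho>"
      using z1 b by (auto simp: pyramid_def ray_cone_scale perp_scale algebra_simps)
    moreover have "z = b *\<^sub>R ((1/b) *\<^sub>R z)" using b by simp
    ultimately show "z \<in> (\<lambda>y. b *\<^sub>R y) ` pyramid c A \<rho>" by blast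
  qed
qed

lemma measure_pyramid_le:
  fixes c :: "'a::euclidean_space"
  assumes b: "0 < b" "b \<le> 1"
  shows "measure lebesgue (pyramid c A \<rho> \<inter> {y. y \<bullet> c \<le> b}) = b ^ DIM('a) * measure lebesgue (pyramid c A \<rho>)"
proof -
  have "measure lebesgue ((\<lambda>x. b *\<^sub>R x + 0) ` pyramid c A \<rho>) = \<bar>b\<bar> ^ DIM('a) * measure lebesgue (pyramid c A \<rho>)"
    by (rule measure_lebesgue_affine)
  then show ?thesis using pyramid_scale[OF b, of c A \<rho>] b by simp
qed

lemma measure_pyramid_slab:
  fixes c :: "'a::euclidean_space"
  assumes c: "norm c = 1" and A: "A \<subseteq> sphere 0 1" "sphere_cone A \<in> sets lebesgue" and r: "\<rho> \<ge> 0"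
    and ab: "0 < a" "a \<le> b" "b \<le> 1"
  shows "measure lebesgue (pyramid c A \<rho> \<inter> slab c a b) = (b ^ DIM('a) - a ^ DIM('a)) * measure lebesgue (pyramid c A \<rho>)"
proof -
  have P: "pyramid c A \<rho> \<in> lmeasurable" by (rule pyramid_lmeasurable[OF c A r])
  have eq: "pyramid c A \<rho> \<inter> slab c a b = (pyramid c A \<rho> \<inter> {y. y \<bullet> c \<le> b}) - (pyramid c A \<rho> \<inter> {y. y \<bullet> c \<le> a})"
    by (auto simp: slab_def)
  have Pb: "pyramid c A \<rho> \<inter> {y. y \<bullet> c \<le> b} \<in> lmeasurable" using P halfspace_le_lebesgue by (rule fmeasurable_Int_fmeasurable)
  have Pa: "pyramid c A \<rho> \<inter> {y. y \<bullet> c \<le> a} \<in> lmeasurable" using P halfspace_le_lebesgue by (rule fmeasurable_Int_fmeasurable)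
  have "measure lebesgue (pyramid c A \<rho> \<inter> slab c a b) = measure lebesgue (pyramid c A \<rho> \<inter> {y. y \<bullet> c \<le> b}) - measure lebesgue (pyramid c A \<rho> \<inter> {y. y \<bullet> c \<le> a})"
    unfolding eq using Pb Pa ab by (intro measure_Diff) (auto simp: fmeasurable_def)
  also have "\<dots> = (b ^ DIM('a) - a ^ DIM('a)) * measure lebesgue (pyramid c A \<rho>)"
    using ab by (simp add: measure_pyramid_le left_diff_distrib)
  finally show ?thesis .
qed

lemma stretch_inner: "norm c = 1 \<Longrightarrow> stretch c l y \<bullet> c = y \<bullet> c"
  by (simp add: stretch_def inner_add_left algebra_simps norm_eq_1[symmetric] dot_square_norm power2_eq_square)

lemma stretch_perp: "norm c = 1 \<Longrightarrow> perp c (stretch c l y) = l *\<^sub>R perp c y"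
  by (simp add: perp_def stretch_inner) (simp add: stretch_def algebra_simps)

lemma stretch_scale: "stretch c l (k *\<^sub>R y) = k *\<^sub>R stretch c l y"
  by (simp add: stretch_def algebra_simps)

lemma stretch_stretch:
  assumes c: "norm c = 1"
  shows "stretch c l (stretch c m z) = stretch c (l * m) z"
proof -
  define s where "s = z \<bullet> c"
  have e: "stretch c l (stretch c m z) = l *\<^sub>R stretch c m z + ((1 - l) * s) *\<^sub>R c"
    unfolding s_def by (simp only: stretch_def[of c l] stretch_inner[OF c])
  have k: "l * ((1 - m) * s) + (1 - l) * s = (1 - l * m) * s" by algebra
  have "l *\<^sub>R stretch c m z + ((1 - l) * s) *\<^sub>R c
      = (l * m) *\<^sub>R z + (l * ((1 - m) * s) + (1 - l) * s) *\<^sub>R c"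
    by (simp add: stretch_def s_def scaleR_add_right scaleR_add_left)
  also have "\<dots> = stretch c (l * m) z" by (simp only: k) (simp add: stretch_def s_def)
  finally show ?thesis using e by simp
qed

lemma stretch_one: "stretch c 1 z = z"
  by (simp add: stretch_def)

text \<open>Shrinking the orthogonal component keeps a point in the cone over a star-shaped set:
  the direction moves along the great-circle arc towards c.\<close>

lemma star_stretch_ray_cone:
  fixes c :: "'a::euclidean_space"
  assumes c: "norm c = 1" and T: "T \<subseteq> open_hemisphere c" and st: "sph_star_shaped c T"
    and l: "0 < l" "l \<le> 1" and y: "y \<in> ray_cone T"
  shows "stretch c l y \<in> ray_cone T"
proof -
  have y0: "y \<noteq> 0" and xT: "dir y \<in> T" using y by (auto simp: ray_cone_def)
  define x where "x = dir y"
  have xH: "x \<in> open_hemisphere c" using xT T by (auto simp: x_def)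
  have s: "x \<bullet> c > 0" using xH by (simp add: open_hemisphere_def)
  have cc: "c \<bullet> c = 1" using c by (simp add: norm_eq_1)
  define \<kappa> where "\<kappa> = l + (1 - l) * (x \<bullet> c)"
  have k0: "\<kappa> > 0" using l s by (simp add: \<kappa>_def add_pos_nonneg)
  have lk: "l \<le> \<kappa>" using l s by (simp add: \<kappa>_def)
  define \<tau> where "\<tau> = l / \<kappa>"
  have tau: "\<tau> \<in> {0..1}" using l k0 lk by (simp add: \<tau>_def)
  define z where "z = (1 - \<tau>) *\<^sub>R c + \<tau> *\<^sub>R x"
  have zT: "(1 / norm z) *\<^sub>R z \<in> T"
    using st xT tau unfolding sph_star_shaped_def z_def x_def by blast
  have zc: "z \<bullet> c = (1 - \<tau>) + \<tau> * (x \<bullet> c)"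
    by (simp add: z_def inner_add_left cc)
  have "z \<bullet> c > 0"
  proof (cases "\<tau> = 1")
    case True then show ?thesis using zc s by simp
  next
    case False then have "1 - \<tau> > 0" using tau by auto
    then show ?thesis using zc s tau by (simp add: add_pos_nonneg)
  qed
  then have z0: "z \<noteq> 0" by auto
  have kz: "\<kappa> *\<^sub>R z = stretch c l x"
  proof -
    have e2: "\<kappa> * \<tau> = l" using k0 by (simp add: \<tau>_def)
    have e1: "\<kappa> * (1 - \<tau>) = (1 - l) * (x \<bullet> c)"
      using e2 by (simp add: right_diff_distrib \<kappa>_def)
    note e = e1 e2
    have "\<kappa> *\<^sub>R z = (\<kappa> * (1 - \<tau>)) *\<^sub>R c + (\<kappa> * \<tau>) *\<^sub>R x"
      by (simp add: z_def scaleR_add_right)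
    also have "\<dots> = ((1 - l) * (x \<bullet> c)) *\<^sub>R c + l *\<^sub>R x" by (simp only: e)
    also have "\<dots> = stretch c l x" by (simp add: stretch_def)
    finally show ?thesis .
  qed
  have yx: "y = norm y *\<^sub>R x" unfolding x_def by (rule dir_decomp)
  have sy: "stretch c l y = (norm y * \<kappa>) *\<^sub>R z"
    by (subst yx) (simp add: stretch_scale kz[symmetric])
  have pos: "norm y * \<kappa> > 0" using y0 k0 by simp
  have "dir (stretch c l y) = dir z" unfolding sy by (rule dir_scale[OF pos])
  then have "dir (stretch c l y) \<in> T" using zT by (simp add: dir_def)
  moreover have "stretch c l y \<noteq> 0" using sy pos z0 y0 k0 by simp
  ultimately show ?thesis by (simp add: ray_cone_def)
qed

lemma stretch_pyramid_sub:
  fixes c :: "'a::euclidean_space"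
  assumes c: "norm c = 1" and T: "T \<subseteq> open_hemisphere c" and st: "sph_star_shaped c T"
    and l: "0 < l" "l \<le> 1"
  shows "stretch c l ` pyramid c T \<rho> \<subseteq> pyramid c T (l * \<rho>)"
proof
  fix z assume "z \<in> stretch c l ` pyramid c T \<rho>"
  then obtain y where z: "z = stretch c l y" and y: "y \<in> pyramid c T \<rho>" by auto
  have y1: "y \<in> ray_cone T" "y \<bullet> c \<le> 1" "norm (perp c y) < \<rho> * (y \<bullet> c)" using y by (auto simp: pyramid_def)
  have "z \<in> ray_cone T" unfolding z by (rule star_stretch_ray_cone[OF c T st l y1(1)])
  moreover have "l * norm (perp c y) < l * (\<rho> * (y \<bullet> c))" using y1(3) l by simp
  ultimately show "z \<in> pyramid c T (l * \<rho>)"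
    using y1 l by (simp add: pyramid_def z stretch_inner[OF c] stretch_perp[OF c] mult.assoc)
qed

lemma stretch_pyramid_hemi:
  fixes c :: "'a::euclidean_space"
  assumes c: "norm c = 1" and l: "0 < l"
  shows "stretch c l ` pyramid c (open_hemisphere c) \<rho> = pyramid c (open_hemisphere c) (l * \<rho>)"
proof
  show "stretch c l ` pyramid c (open_hemisphere c) \<rho> \<subseteq> pyramid c (open_hemisphere c) (l * \<rho>)"
  proof
    fix z assume "z \<in> stretch c l ` pyramid c (open_hemisphere c) \<rho>"
    then obtain y where z: "z = stretch c l y" and y: "y \<in> pyramid c (open_hemisphere c) \<rho>" by auto
    have y1: "y \<bullet> c > 0" "y \<bullet> c \<le> 1" "norm (perp c y) < \<rho> * (y \<bullet> c)"
      using y by (auto simp: pyramid_def ray_cone_hemi[OF c])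
    have "l * norm (perp c y) < l * (\<rho> * (y \<bullet> c))" using y1(3) l by simp
    then show "z \<in> pyramid c (open_hemisphere c) (l * \<rho>)"
      using y1 l by (simp add: pyramid_def ray_cone_hemi[OF c] z stretch_inner[OF c] stretch_perp[OF c] mult.assoc)
  qed
  show "pyramid c (open_hemisphere c) (l * \<rho>) \<subseteq> stretch c l ` pyramid c (open_hemisphere c) \<rho>"
  proof
    fix z assume z: "z \<in> pyramid c (open_hemisphere c) (l * \<rho>)"
    have z1: "z \<bullet> c > 0" "z \<bullet> c \<le> 1" "norm (perp c z) < l * \<rho> * (z \<bullet> c)"
      using z by (auto simp: pyramid_def ray_cone_hemi[OF c])
    define y where "y = stretch c (1 / l) z"
    have "norm (perp c z) / l < (l * \<rho> * (z \<bullet> c)) / l"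
      by (rule divide_strict_right_mono[OF z1(3) l])
    then have "norm (perp c y) < \<rho> * (z \<bullet> c)"
      using l by (simp add: y_def stretch_perp[OF c])
    then have "y \<in> pyramid c (open_hemisphere c) \<rho>"
      using z1 by (simp add: pyramid_def ray_cone_hemi[OF c] y_def stretch_inner[OF c])
    moreover have "z = stretch c l y"
      using l by (simp add: y_def stretch_stretch[OF c] stretch_one)
    ultimately show "z \<in> stretch c l ` pyramid c (open_hemisphere c) \<rho>" by blast
  qed
qed

section \<open>Pyramid volumes over star-shaped sets\<close>

lemma pyr_vol_nonneg: "pyr_vol c A \<rho> \<ge> 0" by (simp add: pyr_vol_def)

lemma pyr_vol_star_mono:
  fixes c :: "'a::euclidean_space"
  assumes c: "norm c = 1" and T: "T \<subseteq> open_hemisphere c" and st: "sph_star_shaped c T"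
    and Tm: "sphere_cone T \<in> sets lebesgue"
    and l: "0 < l" "l \<le> 1" and r: "\<rho> \<ge> 0"
  shows "l ^ (DIM('a) - 1) * pyr_vol c T \<rho> \<le> pyr_vol c T (l * \<rho>)"
proof -
  have Ts: "T \<subseteq> sphere 0 1" using T by (auto simp: open_hemisphere_def)
  have P: "pyramid c T \<rho> \<in> lmeasurable" by (rule pyramid_lmeasurable[OF c Ts Tm r])
  have P': "pyramid c T (l * \<rho>) \<in> lmeasurable" by (rule pyramid_lmeasurable[OF c Ts Tm]) (use l r in simp)
  note sm = stretch_measure[OF c l(1) P]
  have "l ^ (DIM('a) - 1) * pyr_vol c T \<rho> = measure lebesgue (stretch c l ` pyramid c T \<rho>)"
    using sm by (simp add: pyr_vol_def)
  also have "\<dots> \<le> pyr_vol c T (l * \<rho>)"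
    unfolding pyr_vol_def using stretch_pyramid_sub[OF c T st l] sm(1) P'
    by (intro measure_mono_fmeasurable) (auto simp: fmeasurable_def)
  finally show ?thesis .
qed

lemma pyr_vol_hemi_scale:
  fixes c :: "'a::euclidean_space"
  assumes c: "norm c = 1" and l: "0 < l" and r: "\<rho> \<ge> 0"
  shows "pyr_vol c (open_hemisphere c) (l * \<rho>) = l ^ (DIM('a) - 1) * pyr_vol c (open_hemisphere c) \<rho>"
proof -
  have Hs: "open_hemisphere c \<subseteq> sphere 0 1" by (auto simp: open_hemisphere_def)
  have P: "pyramid c (open_hemisphere c) \<rho> \<in> lmeasurable"
    by (rule pyramid_lmeasurable[OF c Hs sphere_cone_hemi(2)[OF c] r])
  show ?thesis using stretch_measure(2)[OF c l P] stretch_pyramid_hemi[OF c l] by (simp add: pyr_vol_def)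
qed

lemma pyr_vol_ratio_mono:
  fixes c :: "'a::euclidean_space"
  assumes c: "norm c = 1" and T: "T \<subseteq> open_hemisphere c" and st: "sph_star_shaped c T"
    and Tm: "sphere_cone T \<in> sets lebesgue" and \<rho>: "0 \<le> \<rho>'" "\<rho>' \<le> \<rho>"
  shows "pyr_vol c T \<rho> * pyr_vol c (open_hemisphere c) \<rho>'
    \<le> pyr_vol c (open_hemisphere c) \<rho> * pyr_vol c T \<rho>'"
proof (cases "\<rho>' = 0")
  case True
  then show ?thesis by (simp add: pyr_vol_def pyramid_zero pyr_vol_nonneg)
next
  case False
  define l where "l = \<rho>' / \<rho>"
  have l: "0 < l" "l \<le> 1" and \<rho>': "\<rho>' = l * \<rho>" using False \<rho> by (auto simp: l_def)
  have hemi: "pyr_vol c (open_hemisphere c) \<rho>' = l ^ (DIM('a) - 1) * pyr_vol c (open_hemisphere c) \<rho>"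
    unfolding \<rho>' by (rule pyr_vol_hemi_scale[OF c l(1)]) (use \<rho> in linarith)
  have star: "l ^ (DIM('a) - 1) * pyr_vol c T \<rho> \<le> pyr_vol c T \<rho>'"
    unfolding \<rho>' by (rule pyr_vol_star_mono[OF c T st Tm l]) (use \<rho> in linarith)
  have "pyr_vol c T \<rho> * pyr_vol c (open_hemisphere c) \<rho>'
      = (l ^ (DIM('a) - 1) * pyr_vol c T \<rho>) * pyr_vol c (open_hemisphere c) \<rho>"
    by (simp add: hemi)
  also have "\<dots> \<le> pyr_vol c T \<rho>' * pyr_vol c (open_hemisphere c) \<rho>"
    by (rule mult_right_mono[OF star pyr_vol_nonneg])
  finally show ?thesis by (simp add: mult.commute)
qed

text \<open>The pyramids over the hemisphere have positive volume, as they contain a ball.\<close>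

lemma pyr_vol_hemi_pos:
  fixes c :: "'a::euclidean_space"
  assumes c: "norm c = 1"
  shows "pyr_vol c (open_hemisphere c) 1 > 0"
proof -
  have cc: "c \<bullet> c = 1" using c by (simp add: norm_eq_1)
  have sub: "ball ((1/2) *\<^sub>R c) (1/4) \<subseteq> pyramid c (open_hemisphere c) 1"
  proof
    fix y assume y: "y \<in> ball ((1/2) *\<^sub>R c) (1/4)"
    define z where "z = y - (1/2) *\<^sub>R c"
    have nz: "norm z < 1/4" using y by (simp add: z_def dist_norm norm_minus_commute)
    have yz: "y = (1/2) *\<^sub>R c + z" by (simp add: z_def)
    have zc: "\<bar>z \<bullet> c\<bar> \<le> norm z" using Cauchy_Schwarz_ineq2[of z c] c by simp
    have yc: "y \<bullet> c = 1/2 + z \<bullet> c" by (simp add: yz inner_add_left cc)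
    have wy: "perp c y = perp c z" by (simp add: yz perp_def inner_add_left cc algebra_simps)
    have nw: "norm (perp c z) \<le> norm z" by (rule norm_perp_le[OF c])
    have zc2: "- norm z \<le> z \<bullet> c" "z \<bullet> c \<le> norm z" using zc by (auto simp: abs_le_iff)
    have a1: "0 < y \<bullet> c" "y \<bullet> c \<le> 1" "norm (perp c y) < y \<bullet> c"
      using nz zc2 nw unfolding yc wy by linarith+
    then show "y \<in> pyramid c (open_hemisphere c) 1"
      by (simp add: pyramid_def ray_cone_hemi[OF c])
  qed
  have Hs: "open_hemisphere c \<subseteq> sphere 0 1" by (auto simp: open_hemisphere_def)
  have P: "pyramid c (open_hemisphere c) 1 \<in> lmeasurable"
    by (rule pyramid_lmeasurable[OF c Hs sphere_cone_hemi(2)[OF c]]) simp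
  have "0 < measure lebesgue (ball ((1/2) *\<^sub>R c) (1/4))"
    using content_ball_pos[of "1/4" "(1/2) *\<^sub>R c"] by simp
  also have "\<dots> \<le> pyr_vol c (open_hemisphere c) 1"
    unfolding pyr_vol_def using sub P by (intro measure_mono_fmeasurable) auto
  finally show ?thesis .
qed

section \<open>Slicing the truncated cone into slabs\<close>

text \<open>The slope of the circular cone around c that meets the unit sphere at height b.\<close>
definition cone_slope :: "real \<Rightarrow> real" where
  "cone_slope b = sqrt (1 - b\<^sup>2) / b"

lemma cone_slope_sq:
  assumes "0 < b" "b \<le> 1" shows "(cone_slope b)\<^sup>2 = (1 - b\<^sup>2) / b\<^sup>2"
proof -
  have "b\<^sup>2 \<le> 1" using assms by (simp add: power_le_one)
  then show ?thesis by (simp add: cone_slope_def power_divide)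
qed

lemma cone_slope_nonneg: "0 < b \<Longrightarrow> b \<le> 1 \<Longrightarrow> cone_slope b \<ge> 0"
  by (simp add: cone_slope_def power_le_one)

lemma cone_slope_antimono:
  assumes "0 < a" "a \<le> b" "b \<le> 1"
  shows "cone_slope b \<le> cone_slope a"
proof -
  have "a\<^sup>2 \<le> b\<^sup>2" using assms by (simp add: power_mono)
  then have h1: "sqrt (1 - b\<^sup>2) \<le> sqrt (1 - a\<^sup>2)" by simp
  have "b\<^sup>2 \<le> 1" using assms by (simp add: power_le_one)
  then have h2: "sqrt (1 - b\<^sup>2) \<ge> 0" by simp
  have h3: "a\<^sup>2 \<le> 1" using assms by (simp add: power_le_one)
  show ?thesis unfolding cone_slope_def using assms h1 h2 h3 by (intro frac_le) auto
qed

lemma cone_slope_cos: "0 < r \<Longrightarrow> r < pi / 2 \<Longrightarrow> cone_slope (cos r) = tan r"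
proof -
  assume r: "0 < r" "r < pi / 2"
  have "sin r > 0" using r by (intro sin_gt_zero) auto
  moreover have "1 - (cos r)\<^sup>2 = (sin r)\<^sup>2" by (simp add: sin_squared_eq)
  ultimately show ?thesis by (simp add: cone_slope_def tan_def)
qed

lemma cos_facts:
  assumes "0 < r" "r < pi / 2"
  shows "0 < cos r" "cos r < 1" "0 < tan r" "cone_slope (cos r) = tan r"
proof -
  show "0 < cos r" using assms by (intro cos_gt_zero) auto
  have "cos r < cos 0" using assms by (intro cos_monotone_0_pi) auto
  then show "cos r < 1" by simp
  show "0 < tan r" using assms by (intro tan_gt_zero) auto
  show "cone_slope (cos r) = tan r" by (rule cone_slope_cos[OF assms])
qed

lemma inner_le_norm_unit: "norm c = 1 \<Longrightarrow> y \<bullet> c \<le> norm y"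
  using norm_cauchy_schwarz[of y c] by simp

lemma pyramid_slab_subset:
  fixes c :: "'a::euclidean_space"
  assumes c: "norm c = 1" and A: "A \<subseteq> sphere 0 1" and b: "0 < b" "b \<le> 1" and a: "0 \<le> a"
  shows "pyramid c A (cone_slope b) \<inter> slab c a b \<subseteq> sphere_cone A \<inter> slab c a b"
proof
  fix y assume y: "y \<in> pyramid c A (cone_slope b) \<inter> slab c a b"
  have y1: "y \<in> ray_cone A" "norm (perp c y) < cone_slope b * (y \<bullet> c)" "a < y \<bullet> c" "y \<bullet> c \<le> b"
    using y by (auto simp: pyramid_def slab_def)
  define s where "s = y \<bullet> c"
  have s0: "s > 0" using y1(3) a by (simp add: s_def)
  have "(norm (perp c y))\<^sup>2 < (cone_slope b * s)\<^sup>2"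
    using y1(2) norm_ge_zero[of "perp c y"] unfolding s_def by (intro power_strict_mono) auto
  then have "(norm y)\<^sup>2 - s\<^sup>2 < (cone_slope b)\<^sup>2 * s\<^sup>2"
    using norm_perp_sq[OF c, of y] by (simp add: s_def power_mult_distrib)
  also have "\<dots> = (1 - b\<^sup>2) / b\<^sup>2 * s\<^sup>2" using b by (simp add: cone_slope_sq)
  finally have "(norm y)\<^sup>2 < s\<^sup>2 / b\<^sup>2"
    using b by (simp add: field_simps)
  also have "\<dots> \<le> 1" using b s0 y1(4) by (simp add: s_def power_mono divide_le_eq_1)
  finally have "norm y \<le> 1" using abs_square_less_1[of "norm y"] by simp
  then show "y \<in> sphere_cone A \<inter> slab c a b"
    using y y1 sphere_cone_eq[OF A] by auto
qed

lemma cone_slab_subset: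
  fixes c :: "'a::euclidean_space"
  assumes c: "norm c = 1" and A: "A \<subseteq> sphere 0 1" and a: "0 < a" "a < 1"
  shows "sphere_cone A \<inter> slab c a b \<subseteq> pyramid c A (cone_slope a) \<inter> slab c a b"
proof
  fix y assume y: "y \<in> sphere_cone A \<inter> slab c a b"
  then have y1: "y \<in> ray_cone A" "norm y \<le> 1" "a < y \<bullet> c" "y \<bullet> c \<le> b"
    using sphere_cone_eq[OF A] by (auto simp: slab_def)
  define s where "s = y \<bullet> c"
  have s0: "s > a" using y1(3) by (simp add: s_def)
  have s1: "s \<le> 1" using inner_le_norm_unit[OF c, of y] y1(2) by (simp add: s_def)
  have "(norm (perp c y))\<^sup>2 = (norm y)\<^sup>2 - s\<^sup>2" using norm_perp_sq[OF c] by (simp add: s_def)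
  also have "\<dots> \<le> 1 - s\<^sup>2" using y1(2) by (simp add: power_le_one)
  also have "\<dots> < (1 - a\<^sup>2) / a\<^sup>2 * s\<^sup>2"
  proof -
    have "a\<^sup>2 < s\<^sup>2" using s0 a by (simp add: power_strict_mono)
    then have "(1 - s\<^sup>2) * a\<^sup>2 < (1 - a\<^sup>2) * s\<^sup>2" by (simp add: algebra_simps)
    then have "1 - s\<^sup>2 < (1 - a\<^sup>2) * s\<^sup>2 / a\<^sup>2"
      using pos_less_divide_eq[of "a\<^sup>2" "1 - s\<^sup>2" "(1 - a\<^sup>2) * s\<^sup>2"] a by simp
    then show ?thesis by simp
  qed
  also have "\<dots> = (cone_slope a * s)\<^sup>2" using a by (simp add: cone_slope_sq power_mult_distrib)
  finally have sq: "(norm (perp c y))\<^sup>2 < (cone_slope a * s)\<^sup>2" .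
  have "0 \<le> cone_slope a * s" using cone_slope_nonneg[of a] a s0 by simp
  then have "norm (perp c y) < cone_slope a * s" using power_less_imp_less_base[OF sq] by blast
  then show "y \<in> pyramid c A (cone_slope a) \<inter> slab c a b"
    using y1 s1 by (auto simp: pyramid_def slab_def s_def)
qed

lemma cone_slab_measure_lower:
  fixes c :: "'a::euclidean_space"
  assumes c: "norm c = 1" and A: "A \<subseteq> sphere 0 1" "sphere_cone A \<in> sets lebesgue"
    and ab: "0 < a" "a \<le> b" "b \<le> 1"
  shows "(b ^ DIM('a) - a ^ DIM('a)) * pyr_vol c A (cone_slope b) \<le> measure lebesgue (sphere_cone A \<inter> slab c a b)"
proof -
  have b0: "0 < b" using ab by simp
  have "(b ^ DIM('a) - a ^ DIM('a)) * pyr_vol c A (cone_slope b) = measure lebesgue (pyramid c A (cone_slope b) \<inter> slab c a b)"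
    unfolding pyr_vol_def using measure_pyramid_slab[OF c A cone_slope_nonneg[OF b0 ab(3)] ab] by simp
  also have "\<dots> \<le> measure lebesgue (sphere_cone A \<inter> slab c a b)"
  proof (rule measure_mono_fmeasurable)
    show "pyramid c A (cone_slope b) \<inter> slab c a b \<subseteq> sphere_cone A \<inter> slab c a b"
      by (rule pyramid_slab_subset[OF c A(1) b0 ab(3)]) (use ab in simp)
    show "pyramid c A (cone_slope b) \<inter> slab c a b \<in> sets lebesgue"
      using pyramid_lmeasurable[OF c A cone_slope_nonneg[OF b0 ab(3)]] slab_lebesgue by (metis fmeasurableD sets.Int)
    show "sphere_cone A \<inter> slab c a b \<in> lmeasurable"
      using sphere_cone_lmeasurable[OF A] slab_lebesgue by (rule fmeasurable_Int_fmeasurable)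
  qed
  finally show ?thesis .
qed

lemma cone_slab_measure_upper:
  fixes c :: "'a::euclidean_space"
  assumes c: "norm c = 1" and A: "A \<subseteq> sphere 0 1" "sphere_cone A \<in> sets lebesgue"
    and ab: "0 < a" "a < 1" "a \<le> b" "b \<le> 1"
  shows "measure lebesgue (sphere_cone A \<inter> slab c a b) \<le> (b ^ DIM('a) - a ^ DIM('a)) * pyr_vol c A (cone_slope a)"
proof -
  have ra: "cone_slope a \<ge> 0" using ab by (intro cone_slope_nonneg) auto
  have "measure lebesgue (sphere_cone A \<inter> slab c a b) \<le> measure lebesgue (pyramid c A (cone_slope a) \<inter> slab c a b)"
  proof (rule measure_mono_fmeasurable)
    show "sphere_cone A \<inter> slab c a b \<subseteq> pyramid c A (cone_slope a) \<inter> slab c a b"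
      by (rule cone_slab_subset[OF c A(1) ab(1,2)])
    show "sphere_cone A \<inter> slab c a b \<in> sets lebesgue"
      using A(2) slab_lebesgue by (rule sets.Int)
    show "pyramid c A (cone_slope a) \<inter> slab c a b \<in> lmeasurable"
      using pyramid_lmeasurable[OF c A ra] slab_lebesgue by (rule fmeasurable_Int_fmeasurable)
  qed
  also have "\<dots> = (b ^ DIM('a) - a ^ DIM('a)) * pyr_vol c A (cone_slope a)"
    unfolding pyr_vol_def using measure_pyramid_slab[OF c A ra ab(1,3,4)] by simp
  finally show ?thesis .
qed

lemma slab_split:
  fixes E :: "'a::euclidean_space set"
  assumes E: "E \<in> lmeasurable" and ab: "a \<le> b" "b \<le> d"
  shows "measure lebesgue (E \<inter> slab c a d) = measure lebesgue (E \<inter> slab c a b) + measure lebesgue (E \<inter> slab c b d)"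
proof -
  have eq: "E \<inter> slab c a d = (E \<inter> slab c a b) \<union> (E \<inter> slab c b d)"
    using ab by (auto simp: slab_def)
  have f1: "E \<inter> slab c a b \<in> lmeasurable" using E slab_lebesgue by (rule fmeasurable_Int_fmeasurable)
  have f2: "E \<inter> slab c b d \<in> lmeasurable" using E slab_lebesgue by (rule fmeasurable_Int_fmeasurable)
  show ?thesis
    unfolding eq using f1 f2 by (intro measure_Union) (auto simp: fmeasurable_def slab_def)
qed

lemma pyr_vol_mono:
  fixes c :: "'a::euclidean_space"
  assumes c: "norm c = 1" and A: "A \<subseteq> sphere 0 1" "sphere_cone A \<in> sets lebesgue"
    and \<rho>: "0 \<le> \<rho>" "\<rho> \<le> \<rho>'"
  shows "pyr_vol c A \<rho> \<le> pyr_vol c A \<rho>'"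
  unfolding pyr_vol_def
proof (rule measure_mono_fmeasurable)
  show "pyramid c A \<rho> \<subseteq> pyramid c A \<rho>'"
  proof
    fix y assume y: "y \<in> pyramid c A \<rho>"
    have "\<rho> * (y \<bullet> c) \<le> \<rho>' * (y \<bullet> c)"
      using pyramid_pos[OF y \<rho>(1)] \<rho> by (intro mult_right_mono) auto
    then show "y \<in> pyramid c A \<rho>'" using y by (auto simp: pyramid_def)
  qed
  show "pyramid c A \<rho> \<in> sets lebesgue"
    using pyramid_lmeasurable[OF c A \<rho>(1)] by (rule fmeasurableD)
  show "pyramid c A \<rho>' \<in> lmeasurable"
    using \<rho> by (intro pyramid_lmeasurable[OF c A]) simp
qed

lemma slab_measure_tendsto_zero:
  fixes E :: "'a::euclidean_space set"
  assumes E: "E \<in> lmeasurable"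
  shows "(\<lambda>k. measure lebesgue (E \<inter> slab c 0 (inverse (real (Suc k))))) \<longlonglongrightarrow> 0"
proof -
  define S where "S k = E \<inter> slab c 0 (inverse (real (Suc k)))" for k
  have "(\<lambda>k. measure lebesgue (S k)) \<longlonglongrightarrow> measure lebesgue (\<Inter>k. S k)"
  proof (rule Lim_measure_decseq)
    show "range S \<subseteq> sets lebesgue"
      using fmeasurableD[OF E] slab_lebesgue by (auto simp: S_def)
    show "decseq S"
    proof (rule decseq_SucI)
      fix k
      have "inverse (real (Suc (Suc k))) \<le> inverse (real (Suc k))"
        by (rule le_imp_inverse_le) auto
      then show "S (Suc k) \<subseteq> S k"
        unfolding S_def slab_def by (auto intro: order_trans)
    qed
    show "emeasure lebesgue (S k) \<noteq> \<infinity>" for k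
    proof -
      have "S k \<in> lmeasurable"
        unfolding S_def using E slab_lebesgue by (rule fmeasurable_Int_fmeasurable)
      from fmeasurableD2[OF this] show ?thesis unfolding infinity_ennreal_def .
    qed
  qed
  moreover have "(\<Inter>k. S k) = {}"
  proof (rule equals0I)
    fix y assume y: "y \<in> (\<Inter>k. S k)"
    then have "0 < y \<bullet> c" by (auto simp: S_def slab_def)
    then obtain k where k: "inverse (real (Suc k)) < y \<bullet> c" using reals_Archimedean by blast
    have "y \<in> S k" using y by blast
    with k show False by (auto simp: S_def slab_def)
  qed
  ultimately show ?thesis by (simp add: S_def)
qed

section \<open>A Riemann sum comparison\<close>

lemma additive_partition_sum:
  fixes \<mu> :: "real \<Rightarrow> real \<Rightarrow> real" and t :: "nat \<Rightarrow> real"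
  assumes add: "\<And>u v w. a \<le> u \<Longrightarrow> u \<le> v \<Longrightarrow> v \<le> w \<Longrightarrow> w \<le> b \<Longrightarrow> \<mu> u w = \<mu> u v + \<mu> v w"
    and t0: "t 0 = a" and t_mono: "\<And>i. t i \<le> t (Suc i)" and tN: "t N \<le> b"
  shows "\<mu> a (t N) = (\<Sum>i<N. \<mu> (t i) (t (Suc i)))"
proof -
  have t_le: "t i \<le> t j" if "i \<le> j" for i j
    using lift_Suc_mono_le[of t, OF t_mono that] .
  have "\<mu> a (t k) = (\<Sum>i<k. \<mu> (t i) (t (Suc i)))" if "k \<le> N" for k
    using that
  proof (induction k)
    case 0
    have "a \<le> b" using t_le[of 0 N] t0 tN by simp
    then have "\<mu> a a = \<mu> a a + \<mu> a a" using add[of a a a] by simp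
    then show ?case using t0 by simp
  next
    case (Suc k)
    have "a \<le> t k" "t (Suc k) \<le> b"
      using t_le[of 0 k] t_le[of "Suc k" N] t0 tN Suc.prems by auto
    then have "\<mu> a (t (Suc k)) = \<mu> a (t k) + \<mu> (t k) (t (Suc k))"
      using add t_mono by simp
    then show ?case using Suc by simp
  qed
  then show ?thesis by simp
qed

text \<open>On a uniform partition into N pieces the
  difference telescopes to at most L (b - a) (g a - g b) / N, so the first is at most the second
  on the whole interval.\<close>
context
  fixes a b L :: real and \<mu> \<nu> :: "real \<Rightarrow> real \<Rightarrow> real" and F g :: "real \<Rightarrow> real"
  assumes add_mu: "\<And>u v w. a \<le> u \<Longrightarrow> u \<le> v \<Longrightarrow> v \<le> w \<Longrightarrow> w \<le> b \<Longrightarrow> \<mu> u w = \<mu> u v + \<mu> v w"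
    and add_nu: "\<And>u v w. a \<le> u \<Longrightarrow> u \<le> v \<Longrightarrow> v \<le> w \<Longrightarrow> w \<le> b \<Longrightarrow> \<nu> u w = \<nu> u v + \<nu> v w"
    and F: "\<And>u v. a \<le> u \<Longrightarrow> u \<le> v \<Longrightarrow> v \<le> b \<Longrightarrow> F u \<le> F v \<and> F v - F u \<le> L * (v - u)"
    and g: "\<And>u v. a \<le> u \<Longrightarrow> u \<le> v \<Longrightarrow> v \<le> b \<Longrightarrow> g v \<le> g u"
    and upper: "\<And>u v. a \<le> u \<Longrightarrow> u < v \<Longrightarrow> v \<le> b \<Longrightarrow> \<mu> u v \<le> (F v - F u) * g u"
    and lower: "\<And>u v. a \<le> u \<Longrightarrow> u < v \<Longrightarrow> v \<le> b \<Longrightarrow> (F v - F u) * g v \<le> \<nu> u v"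
begin

lemma riemann_partition_bound:
  assumes ab': "a < b" and N: "0 < N"
  shows "\<mu> a b \<le> \<nu> a b + L * (b - a) * (g a - g b) / real N"
proof -
  define h where "h = (b - a) / real N"
  define t where "t i = a + real i * h" for i
  have h: "0 < h" using ab' N by (simp add: h_def)
  have t_step: "t (Suc i) = t i + h" for i by (simp add: t_def algebra_simps)
  have t0: "t 0 = a" and tN: "t N = b" using N by (simp_all add: t_def h_def)
  have t_mono: "t i \<le> t (Suc i)" for i using h t_step by simp
  have t_range: "a \<le> t i" "t (Suc i) \<le> b" if "i < N" for i
  proof -
    show "a \<le> t i" using h by (simp add: t_def)
    have "real (Suc i) * h \<le> real N * h" using that h by (intro mult_right_mono) auto
    then show "t (Suc i) \<le> b" using N by (simp add: t_def h_def)
  qed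
  define \<Delta> where "\<Delta> i = F (t (Suc i)) - F (t i)" for i
  have \<Delta>: "0 \<le> \<Delta> i" "\<Delta> i \<le> L * h" if "i < N" for i
    using F[of "t i" "t (Suc i)"] t_range[OF that] t_mono[of i] by (auto simp: \<Delta>_def t_step)
  have g_step: "g (t (Suc i)) \<le> g (t i)" if "i < N" for i
    using g t_range[OF that] t_mono[of i] by blast
  have piece_lt: "t i < t (Suc i)" for i using h t_step by simp
  have "\<mu> a b = (\<Sum>i<N. \<mu> (t i) (t (Suc i)))"
    using additive_partition_sum[of a b \<mu> t N, OF add_mu t0 t_mono] tN by simp
  also have "\<dots> \<le> (\<Sum>i<N. \<Delta> i * g (t i))"
    using upper t_range piece_lt by (intro sum_mono) (simp add: \<Delta>_def)
  finally have up: "\<mu> a b \<le> (\<Sum>i<N. \<Delta> i * g (t i))" .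
  have "(\<Sum>i<N. \<Delta> i * g (t (Suc i))) \<le> (\<Sum>i<N. \<nu> (t i) (t (Suc i)))"
    using lower t_range piece_lt by (intro sum_mono) (simp add: \<Delta>_def)
  also have "\<dots> = \<nu> a b"
    using additive_partition_sum[of a b \<nu> t N, OF add_nu t0 t_mono] tN by simp
  finally have low: "(\<Sum>i<N. \<Delta> i * g (t (Suc i))) \<le> \<nu> a b" .
  have "(\<Sum>i<N. \<Delta> i * (g (t i) - g (t (Suc i)))) \<le> (\<Sum>i<N. L * h * (g (t i) - g (t (Suc i))))"
    using \<Delta> g_step by (intro sum_mono mult_right_mono) auto
  also have "\<dots> = L * h * (g a - g b)"
    by (simp only: sum_distrib_left[symmetric] sum_lessThan_telescope'[of "\<lambda>i. g (t i)"] t0 tN)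
  finally have err: "(\<Sum>i<N. \<Delta> i * (g (t i) - g (t (Suc i)))) \<le> L * h * (g a - g b)" .
  have split: "(\<Sum>i<N. \<Delta> i * g (t i))
      = (\<Sum>i<N. \<Delta> i * g (t (Suc i))) + (\<Sum>i<N. \<Delta> i * (g (t i) - g (t (Suc i))))"
    by (simp add: sum.distrib[symmetric] algebra_simps)
  have "\<mu> a b \<le> \<nu> a b + L * h * (g a - g b)"
    using up split low err by linarith
  then show ?thesis by (simp add: h_def)
qed

lemma riemann_comparison:
  assumes ab: "a \<le> b"
  shows "\<mu> a b \<le> \<nu> a b"
proof (cases "a = b")
  case True
  then show ?thesis using add_mu[of a a a] add_nu[of a a a] by simp
next
  case False
  then have ab': "a < b" using ab by simp
  have "(\<lambda>N. \<nu> a b + L * (b - a) * (g a - g b) / real N) \<longlonglongrightarrow> \<nu> a b + 0"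
    by (intro tendsto_add tendsto_const lim_const_over_n)
  then have "(\<lambda>N. \<nu> a b + L * (b - a) * (g a - g b) / real N) \<longlonglongrightarrow> \<nu> a b"
    by simp
  then show ?thesis
    by (rule LIMSEQ_le_const) (use riemann_partition_bound[OF ab'] in \<open>auto intro!: exI[of _ 1]\<close>)
qed

end

section \<open>Comparing T with the hemisphere slab by slab\<close>

lemma power_increment:
  fixes u v :: real
  assumes "0 \<le> u" "u \<le> v" "v \<le> 1"
  shows "u ^ n \<le> v ^ n \<and> v ^ n - u ^ n \<le> real n * (v - u)"
proof
  show "u ^ n \<le> v ^ n" using assms by (intro power_mono) auto
  show "v ^ n - u ^ n \<le> real n * (v - u)"
  proof (induction n)
    case (Suc n)
    have "v ^ Suc n - u ^ Suc n = v * (v ^ n - u ^ n) + u ^ n * (v - u)"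
      by (simp add: algebra_simps)
    also have "\<dots> \<le> 1 * (real n * (v - u)) + 1 * (v - u)"
    proof (rule add_mono)
      have "v ^ n - u ^ n \<ge> 0" using assms by (simp add: power_mono)
      then show "v * (v ^ n - u ^ n) \<le> 1 * (real n * (v - u))"
        using Suc.IH assms by (intro mult_mono) auto
      show "u ^ n * (v - u) \<le> 1 * (v - u)"
        using assms by (intro mult_right_mono) (auto simp: power_le_one)
    qed
    finally show ?case by (simp add: algebra_simps)
  qed simp
qed

lemma cone_slope_range:
  assumes "0 < u" "u \<le> v" "v \<le> 1"
  shows "0 \<le> cone_slope v \<and> cone_slope v \<le> cone_slope u"
  using assms cone_slope_nonneg[of v] cone_slope_antimono[of u v] by simp

lemma cone_slab_additive:
  fixes c :: "'a::euclidean_space"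
  assumes A: "A \<subseteq> sphere 0 1" "sphere_cone A \<in> sets lebesgue" and uvw: "u \<le> v" "v \<le> w"
  shows "k * measure lebesgue (sphere_cone A \<inter> slab c u w)
    = k * measure lebesgue (sphere_cone A \<inter> slab c u v) + k * measure lebesgue (sphere_cone A \<inter> slab c v w)"
  using slab_split[OF sphere_cone_lmeasurable[OF A] uvw] by (simp add: distrib_left)

text \<open>Above height cos r the slopes are at most tan r, where the ratio of the pyramid volumes
  of T and of the hemisphere is at least its value at tan r; so there the cone over T is
  relatively at least as large.\<close>
lemma comparison_above:
  fixes c :: "'a::euclidean_space"
  assumes c: "norm c = 1" and T: "T \<subseteq> open_hemisphere c" and st: "sph_star_shaped c T"
    and Tm: "sphere_cone T \<in> sets lebesgue" and r: "0 < r" "r < pi / 2"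
  shows "pyr_vol c T (tan r) * measure lebesgue (sphere_cone (open_hemisphere c) \<inter> slab c (cos r) 1)
    \<le> pyr_vol c (open_hemisphere c) (tan r) * measure lebesgue (sphere_cone T \<inter> slab c (cos r) 1)"
proof -
  define H where "H = open_hemisphere c"
  define p where "p = pyr_vol c T (tan r)"
  define q where "q = pyr_vol c H (tan r)"
  define mT where "mT u v = measure lebesgue (sphere_cone T \<inter> slab c u v)" for u v
  define mH where "mH u v = measure lebesgue (sphere_cone H \<inter> slab c u v)" for u v
  note cr = cos_facts[OF r]
  have Ts: "T \<subseteq> sphere 0 1" and Hs: "H \<subseteq> sphere 0 1"
    using T by (auto simp: H_def open_hemisphere_def)
  have Hm: "sphere_cone H \<in> sets lebesgue" using sphere_cone_hemi(2)[OF c] by (simp add: H_def)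
  have p0: "0 \<le> p" and q0: "0 \<le> q" by (simp_all add: p_def q_def pyr_vol_nonneg)
  have "p * mH (cos r) 1 \<le> q * mT (cos r) 1"
  proof (rule riemann_comparison[where a = "cos r" and b = 1 and \<mu> = "\<lambda>u v. p * mH u v"
        and \<nu> = "\<lambda>u v. q * mT u v" and F = "\<lambda>s. s ^ DIM('a)" and L = "real DIM('a)"
        and g = "\<lambda>s. p * pyr_vol c H (cone_slope s)"])
    show "cos r \<le> 1" by simp
    show "p * mH u w = p * mH u v + p * mH v w" if "u \<le> v" "v \<le> w" for u v w
      unfolding mH_def using cone_slab_additive[OF Hs Hm that] .
    show "q * mT u w = q * mT u v + q * mT v w" if "u \<le> v" "v \<le> w" for u v w
      unfolding mT_def using cone_slab_additive[OF Ts Tm that] .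
    show "u ^ DIM('a) \<le> v ^ DIM('a) \<and> v ^ DIM('a) - u ^ DIM('a) \<le> real DIM('a) * (v - u)"
      if "cos r \<le> u" "u \<le> v" "v \<le> 1" for u v
      using cr that by (intro power_increment) auto
    show "p * pyr_vol c H (cone_slope v) \<le> p * pyr_vol c H (cone_slope u)"
      if "cos r \<le> u" "u \<le> v" "v \<le> 1" for u v
      using cr that cone_slope_range[of u v] by (intro mult_left_mono pyr_vol_mono[OF c Hs Hm] p0) auto
    show "p * mH u v \<le> (v ^ DIM('a) - u ^ DIM('a)) * (p * pyr_vol c H (cone_slope u))"
      if "cos r \<le> u" "u < v" "v \<le> 1" for u v
    proof -
      have "mH u v \<le> (v ^ DIM('a) - u ^ DIM('a)) * pyr_vol c H (cone_slope u)"
        unfolding mH_def by (rule cone_slab_measure_upper[OF c Hs Hm]) (use cr that in auto)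
      from mult_left_mono[OF this p0] show ?thesis by (simp add: ac_simps)
    qed
    show "(v ^ DIM('a) - u ^ DIM('a)) * (p * pyr_vol c H (cone_slope v)) \<le> q * mT u v"
      if "cos r \<le> u" "u < v" "v \<le> 1" for u v
    proof -
      have slope: "0 \<le> cone_slope v" "cone_slope v \<le> tan r"
        using cone_slope_range[of "cos r" v] cr that by auto
      have ratio: "p * pyr_vol c H (cone_slope v) \<le> q * pyr_vol c T (cone_slope v)"
        using pyr_vol_ratio_mono[OF c T st Tm slope] by (simp add: p_def q_def H_def)
      have incr: "0 \<le> v ^ DIM('a) - u ^ DIM('a)"
        using power_increment[of u v] cr that by auto
      have "(v ^ DIM('a) - u ^ DIM('a)) * pyr_vol c T (cone_slope v) \<le> mT u v"
        unfolding mT_def by (rule cone_slab_measure_lower[OF c Ts Tm]) (use cr that in auto)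
      from mult_left_mono[OF this q0] mult_left_mono[OF ratio incr] show ?thesis
        by (simp add: ac_simps)
    qed
  qed
  then show ?thesis by (simp add: mH_def mT_def p_def q_def H_def)
qed

text \<open>Below height cos r the slopes are at least tan r, so there the cone over T is relatively
  at most as large.  Near height 0 the slopes blow up, so the comparison is first made above
  a positive height delta.\<close>
lemma comparison_between:
  fixes c :: "'a::euclidean_space"
  assumes c: "norm c = 1" and T: "T \<subseteq> open_hemisphere c" and st: "sph_star_shaped c T"
    and Tm: "sphere_cone T \<in> sets lebesgue" and r: "0 < r" "r < pi / 2"
    and \<delta>: "0 < \<delta>" "\<delta> \<le> cos r"
  shows "pyr_vol c (open_hemisphere c) (tan r) * measure lebesgue (sphere_cone T \<inter> slab c \<delta> (cos r))
    \<le> pyr_vol c T (tan r) * measure lebesgue (sphere_cone (open_hemisphere c) \<inter> slab c \<delta> (cos r))"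
proof -
  define H where "H = open_hemisphere c"
  define p where "p = pyr_vol c T (tan r)"
  define q where "q = pyr_vol c H (tan r)"
  define mT where "mT u v = measure lebesgue (sphere_cone T \<inter> slab c u v)" for u v
  define mH where "mH u v = measure lebesgue (sphere_cone H \<inter> slab c u v)" for u v
  note cr = cos_facts[OF r]
  have Ts: "T \<subseteq> sphere 0 1" and Hs: "H \<subseteq> sphere 0 1"
    using T by (auto simp: H_def open_hemisphere_def)
  have Hm: "sphere_cone H \<in> sets lebesgue" using sphere_cone_hemi(2)[OF c] by (simp add: H_def)
  have p0: "0 \<le> p" and q0: "0 \<le> q" by (simp_all add: p_def q_def pyr_vol_nonneg)
  have "q * mT \<delta> (cos r) \<le> p * mH \<delta> (cos r)"
  proof (rule riemann_comparison[where a = \<delta> and b = "cos r" and \<mu> = "\<lambda>u v. q * mT u v"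
        and \<nu> = "\<lambda>u v. p * mH u v" and F = "\<lambda>s. s ^ DIM('a)" and L = "real DIM('a)"
        and g = "\<lambda>s. p * pyr_vol c H (cone_slope s)"])
    show "\<delta> \<le> cos r" by (fact \<delta>(2))
    show "q * mT u w = q * mT u v + q * mT v w" if "u \<le> v" "v \<le> w" for u v w
      unfolding mT_def using cone_slab_additive[OF Ts Tm that] .
    show "p * mH u w = p * mH u v + p * mH v w" if "u \<le> v" "v \<le> w" for u v w
      unfolding mH_def using cone_slab_additive[OF Hs Hm that] .
    show "u ^ DIM('a) \<le> v ^ DIM('a) \<and> v ^ DIM('a) - u ^ DIM('a) \<le> real DIM('a) * (v - u)"
      if "\<delta> \<le> u" "u \<le> v" "v \<le> cos r" for u v
      using cr \<delta> that by (intro power_increment) auto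
    show "p * pyr_vol c H (cone_slope v) \<le> p * pyr_vol c H (cone_slope u)"
      if "\<delta> \<le> u" "u \<le> v" "v \<le> cos r" for u v
      using cr \<delta> that cone_slope_range[of u v]
      by (intro mult_left_mono pyr_vol_mono[OF c Hs Hm] p0) auto
    show "q * mT u v \<le> (v ^ DIM('a) - u ^ DIM('a)) * (p * pyr_vol c H (cone_slope u))"
      if "\<delta> \<le> u" "u < v" "v \<le> cos r" for u v
    proof -
      have slope: "0 \<le> tan r" "tan r \<le> cone_slope u"
        using cone_slope_range[of u "cos r"] cr \<delta> that by auto
      have ratio: "q * pyr_vol c T (cone_slope u) \<le> p * pyr_vol c H (cone_slope u)"
        using pyr_vol_ratio_mono[OF c T st Tm slope] by (simp add: p_def q_def H_def ac_simps)
      have incr: "0 \<le> v ^ DIM('a) - u ^ DIM('a)"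
        using power_increment[of u v] \<delta> that by auto
      have "mT u v \<le> (v ^ DIM('a) - u ^ DIM('a)) * pyr_vol c T (cone_slope u)"
        unfolding mT_def by (rule cone_slab_measure_upper[OF c Ts Tm]) (use cr \<delta> that in auto)
      from mult_left_mono[OF this q0] mult_left_mono[OF ratio incr] show ?thesis
        by (simp add: ac_simps)
    qed
    show "(v ^ DIM('a) - u ^ DIM('a)) * (p * pyr_vol c H (cone_slope v)) \<le> p * mH u v"
      if "\<delta> \<le> u" "u < v" "v \<le> cos r" for u v
    proof -
      have "(v ^ DIM('a) - u ^ DIM('a)) * pyr_vol c H (cone_slope v) \<le> mH u v"
        unfolding mH_def by (rule cone_slab_measure_lower[OF c Hs Hm]) (use cr \<delta> that in auto)
      from mult_left_mono[OF this p0] show ?thesis by (simp add: ac_simps)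
    qed
  qed
  then show ?thesis by (simp add: mH_def mT_def p_def q_def H_def)
qed

text \<open>Letting delta tend to 0, the slab near height 0 contributes nothing in the limit.\<close>
lemma comparison_below:
  fixes c :: "'a::euclidean_space"
  assumes c: "norm c = 1" and T: "T \<subseteq> open_hemisphere c" and st: "sph_star_shaped c T"
    and Tm: "sphere_cone T \<in> sets lebesgue" and r: "0 < r" "r < pi / 2"
  shows "pyr_vol c (open_hemisphere c) (tan r) * measure lebesgue (sphere_cone T \<inter> slab c 0 (cos r))
    \<le> pyr_vol c T (tan r) * measure lebesgue (sphere_cone (open_hemisphere c) \<inter> slab c 0 (cos r))"
proof -
  define H where "H = open_hemisphere c"
  define p where "p = pyr_vol c T (tan r)"
  define q where "q = pyr_vol c H (tan r)"
  define mT where "mT u v = measure lebesgue (sphere_cone T \<inter> slab c u v)" for u v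
  define mH where "mH u v = measure lebesgue (sphere_cone H \<inter> slab c u v)" for u v
  note cr = cos_facts[OF r]
  have Ts: "T \<subseteq> sphere 0 1" and Hs: "H \<subseteq> sphere 0 1"
    using T by (auto simp: H_def open_hemisphere_def)
  have Hm: "sphere_cone H \<in> sets lebesgue" using sphere_cone_hemi(2)[OF c] by (simp add: H_def)
  have p0: "0 \<le> p" by (simp add: p_def pyr_vol_nonneg)
  have above_delta: "q * mT \<delta> (cos r) \<le> p * mH \<delta> (cos r)" if "0 < \<delta>" "\<delta> \<le> cos r" for \<delta>
    using comparison_between[OF c T st Tm r that] by (simp add: mH_def mT_def p_def q_def H_def)
  have split_delta: "q * mT 0 (cos r) \<le> q * mT 0 \<delta> + p * mH 0 (cos r)" if \<delta>: "0 < \<delta>" "\<delta> \<le> cos r" for \<delta>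
  proof -
    have "q * mT 0 (cos r) = q * mT 0 \<delta> + q * mT \<delta> (cos r)"
      unfolding mT_def using cone_slab_additive[OF Ts Tm, of 0 \<delta> "cos r"] \<delta> by simp
    moreover have "p * mH 0 (cos r) = p * mH 0 \<delta> + p * mH \<delta> (cos r)"
      unfolding mH_def using cone_slab_additive[OF Hs Hm, of 0 \<delta> "cos r"] \<delta> by simp
    moreover have "0 \<le> p * mH 0 \<delta>" using p0 by (simp add: mH_def)
    ultimately show ?thesis using above_delta[OF \<delta>] by linarith
  qed
  have "(\<lambda>k. q * mT 0 (inverse (real (Suc k))) + p * mH 0 (cos r)) \<longlonglongrightarrow> q * 0 + p * mH 0 (cos r)"
    unfolding mT_def
    by (intro tendsto_intros slab_measure_tendsto_zero sphere_cone_lmeasurable[OF Ts Tm])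
  moreover obtain n where n: "inverse (real (Suc n)) < cos r"
    using reals_Archimedean cr(1) by blast
  have "\<forall>k\<ge>n. q * mT 0 (cos r) \<le> q * mT 0 (inverse (real (Suc k))) + p * mH 0 (cos r)"
  proof (intro allI impI split_delta)
    fix k assume "n \<le> k"
    then have "inverse (real (Suc k)) \<le> inverse (real (Suc n))"
      by (intro le_imp_inverse_le) auto
    then show "inverse (real (Suc k)) \<le> cos r" using n by linarith
  qed simp
  ultimately have "q * mT 0 (cos r) \<le> q * 0 + p * mH 0 (cos r)"
    by (intro LIMSEQ_le_const) auto
  then show ?thesis by (simp add: mH_def mT_def p_def q_def H_def)
qed

section \<open>The cone over a spherical ball\<close>

lemma arccos_less_iff:
  assumes "-1 \<le> u" "u \<le> 1" "0 \<le> r" "r \<le> pi"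
  shows "arccos u < r \<longleftrightarrow> cos r < u"
proof
  assume h: "arccos u < r"
  have "cos r < cos (arccos u)"
    using h assms arccos_lbound[of u] by (intro cos_monotone_0_pi) auto
  then show "cos r < u" using assms by simp
next
  assume h: "cos r < u"
  show "arccos u < r"
  proof (rule ccontr)
    assume "\<not> arccos u < r"
    then have "cos (arccos u) \<le> cos r"
      using assms arccos_ubound[of u] by (intro cos_monotone_0_pi_le) auto
    then show False using h assms by simp
  qed
qed

lemma ray_cone_ball:
  fixes c :: "'a::euclidean_space"
  assumes c: "norm c = 1" and r: "0 \<le> r" "r \<le> pi"
  shows "ray_cone (A \<inter> sph_ball c r) = ray_cone A \<inter> {y. cos r * norm y < y \<bullet> c}"
proof -
  have "dir y \<in> sph_ball c r \<longleftrightarrow> cos r * norm y < y \<bullet> c" if y: "y \<noteq> 0" for y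
  proof -
    have nd: "norm (dir y) = 1" using y by (rule norm_dir)
    have "\<bar>dir y \<bullet> c\<bar> \<le> 1" using Cauchy_Schwarz_ineq2[of "dir y" c] nd c by simp
    then have "arccos (dir y \<bullet> c) < r \<longleftrightarrow> cos r < dir y \<bullet> c"
      using r by (intro arccos_less_iff) auto
    also have "\<dots> \<longleftrightarrow> cos r * norm y < y \<bullet> c"
      using y by (simp add: dir_def field_simps)
    finally show ?thesis using nd by (simp add: sph_ball_def)
  qed
  then show ?thesis by (auto simp: ray_cone_def)
qed

lemma sphere_cone_ball_lebesgue:
  fixes c :: "'a::euclidean_space"
  assumes c: "norm c = 1" and A: "A \<subseteq> sphere 0 1" and Am: "sphere_cone A \<in> sets lebesgue"
    and r: "0 \<le> r" "r \<le> pi"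
  shows "sphere_cone (A \<inter> sph_ball c r) \<in> sets lebesgue"
proof -
  have AB: "A \<inter> sph_ball c r \<subseteq> sphere 0 1" using A by auto
  have eq: "sphere_cone (A \<inter> sph_ball c r) = sphere_cone A \<inter> {y. cos r * norm y < y \<bullet> c}"
    using sphere_cone_eq[OF AB] sphere_cone_eq[OF A] ray_cone_ball[OF c r, of A] by auto
  have "open {y::'a. cos r * norm y < y \<bullet> c}" by (intro open_Collect_less continuous_intros)
  then have "{y::'a. cos r * norm y < y \<bullet> c} \<in> sets lebesgue"
    by (metis borel_open sets_completionI_sets sets_lborel)
  then show ?thesis unfolding eq using Am by (metis sets.Int)
qed

lemma sph_ball_subset_hemisphere:
  fixes c :: "'a::euclidean_space"
  assumes c: "norm c = 1" and r: "0 \<le> r" "r \<le> pi / 2"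
  shows "sph_ball c r \<subseteq> open_hemisphere c"
proof
  fix x assume x: "x \<in> sph_ball c r"
  then have nx: "norm x = 1" and a: "arccos (x \<bullet> c) < r" by (auto simp: sph_ball_def)
  have "\<bar>x \<bullet> c\<bar> \<le> 1" using Cauchy_Schwarz_ineq2[of x c] nx c by simp
  then have "cos r < x \<bullet> c" using arccos_less_iff[of "x \<bullet> c" r] a r by auto
  moreover have "cos r \<ge> 0" using r by (intro cos_ge_zero) auto
  ultimately show "x \<in> open_hemisphere c" using nx by (simp add: open_hemisphere_def)
qed

lemma sph_ball_half_pi:
  fixes c :: "'a::euclidean_space"
  assumes c: "norm c = 1"
  shows "sph_ball c (pi / 2) = open_hemisphere c"
proof -
  have "arccos (x \<bullet> c) < pi / 2 \<longleftrightarrow> 0 < x \<bullet> c" if "norm x = 1" for x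
  proof -
    have "\<bar>x \<bullet> c\<bar> \<le> 1" using Cauchy_Schwarz_ineq2[of x c] that c by simp
    then show ?thesis using arccos_less_iff[of "x \<bullet> c" "pi / 2"] by auto
  qed
  then show ?thesis by (auto simp: sph_ball_def open_hemisphere_def)
qed

lemma sq_less_iff:
  fixes a b :: real
  assumes "0 \<le> a" "0 \<le> b"
  shows "a < b \<longleftrightarrow> a\<^sup>2 < b\<^sup>2"
  using power_mono_iff[of b a 2] assms by (auto simp: not_le[symmetric])

lemma cos_sin_pos:
  assumes "0 < r" "r < pi / 2"
  shows "cos r > 0" "sin r > 0" "(cos r)\<^sup>2 + (sin r)\<^sup>2 = 1" "tan r = sin r / cos r"
  using assms by (auto intro!: cos_gt_zero sin_gt_zero simp: tan_def)

lemma slope_angle_iff: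
  fixes c :: "'a::euclidean_space"
  assumes c: "norm c = 1" and r: "0 < r" "r < pi / 2" and y: "0 < y \<bullet> c"
  shows "norm (perp c y) < tan r * (y \<bullet> c) \<longleftrightarrow> cos r * norm y < y \<bullet> c"
proof -
  define co where "co = cos r"
  define si where "si = sin r"
  define s where "s = y \<bullet> c"
  have co: "co > 0" and si: "si > 0" and cs2: "co\<^sup>2 + si\<^sup>2 = 1" and tn: "tan r = si / co"
    using cos_sin_pos[OF r] by (auto simp: co_def si_def)
  have w2: "(norm (perp c y))\<^sup>2 = (norm y)\<^sup>2 - s\<^sup>2" using norm_perp_sq[OF c] by (simp add: s_def)
  have "norm (perp c y) < tan r * s \<longleftrightarrow> co * norm (perp c y) < si * s"
    using co by (simp add: tn field_simps)
  also have "\<dots> \<longleftrightarrow> (co * norm (perp c y))\<^sup>2 < (si * s)\<^sup>2"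
    using co si y unfolding s_def by (intro sq_less_iff) auto
  also have "\<dots> \<longleftrightarrow> co\<^sup>2 * (norm y)\<^sup>2 < (co\<^sup>2 + si\<^sup>2) * s\<^sup>2"
    by (simp add: power_mult_distrib w2 algebra_simps)
  also have "\<dots> \<longleftrightarrow> (co * norm y)\<^sup>2 < s\<^sup>2" by (simp add: cs2 power_mult_distrib)
  also have "\<dots> \<longleftrightarrow> co * norm y < s"
    using co y unfolding s_def by (intro sq_less_iff[symmetric]) auto
  finally show ?thesis by (simp add: s_def co_def)
qed

lemma cone_ball_below:
  fixes c :: "'a::euclidean_space"
  assumes c: "norm c = 1" and A: "A \<subseteq> open_hemisphere c" and r: "0 < r" "r < pi / 2"
  shows "sphere_cone (A \<inter> sph_ball c r) \<inter> {y. y \<bullet> c \<le> cos r}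
    = pyramid c A (tan r) \<inter> {y. y \<bullet> c \<le> cos r}"
proof -
  note cr = cos_facts[OF r]
  have AB: "A \<inter> sph_ball c r \<subseteq> sphere 0 1" using A by (auto simp: open_hemisphere_def)
  have sc: "sphere_cone (A \<inter> sph_ball c r) = ray_cone A \<inter> {y. cos r * norm y < y \<bullet> c} \<inter> cball 0 1"
    using sphere_cone_eq[OF AB] ray_cone_ball[OF c, of r A] r by simp
  show ?thesis
  proof
    show "sphere_cone (A \<inter> sph_ball c r) \<inter> {y. y \<bullet> c \<le> cos r} \<subseteq> pyramid c A (tan r) \<inter> {y. y \<bullet> c \<le> cos r}"
    proof
      fix y assume "y \<in> sphere_cone (A \<inter> sph_ball c r) \<inter> {y. y \<bullet> c \<le> cos r}"
      then have y: "y \<in> ray_cone A" "cos r * norm y < y \<bullet> c" "y \<bullet> c \<le> cos r" using sc by auto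
      have s0: "0 < y \<bullet> c" using y(2) cr(1) by (smt (verit) mult_nonneg_nonneg norm_ge_zero)
      have "norm (perp c y) < tan r * (y \<bullet> c)" using slope_angle_iff[OF c r s0] y(2) by simp
      then show "y \<in> pyramid c A (tan r) \<inter> {y. y \<bullet> c \<le> cos r}"
        using y cr by (simp add: pyramid_def)
    qed
    show "pyramid c A (tan r) \<inter> {y. y \<bullet> c \<le> cos r} \<subseteq> sphere_cone (A \<inter> sph_ball c r) \<inter> {y. y \<bullet> c \<le> cos r}"
    proof
      fix y assume y: "y \<in> pyramid c A (tan r) \<inter> {y. y \<bullet> c \<le> cos r}"
      have s0: "0 < y \<bullet> c" using y pyramid_pos[of y c A "tan r"] cr by auto
      have lt: "cos r * norm y < y \<bullet> c"
        using slope_angle_iff[OF c r s0] y by (simp add: pyramid_def)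
      then have "cos r * norm y < cos r" using y by simp
      then have "norm y \<le> 1" using cr by simp
      then show "y \<in> sphere_cone (A \<inter> sph_ball c r) \<inter> {y. y \<bullet> c \<le> cos r}"
        using y lt sc by (auto simp: pyramid_def)
    qed
  qed
qed

lemma cone_ball_above:
  fixes c :: "'a::euclidean_space"
  assumes c: "norm c = 1" and A: "A \<subseteq> open_hemisphere c" and r: "0 \<le> r" "r \<le> pi / 2"
  shows "sphere_cone (A \<inter> sph_ball c r) \<inter> {y. y \<bullet> c > cos r} = sphere_cone A \<inter> {y. y \<bullet> c > cos r}"
proof -
  have As: "A \<subseteq> sphere 0 1" using A by (auto simp: open_hemisphere_def)
  have AB: "A \<inter> sph_ball c r \<subseteq> sphere 0 1" using A by (auto simp: open_hemisphere_def)
  have co: "cos r \<ge> 0" using r by (intro cos_ge_zero) auto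
  have "cos r * norm y < y \<bullet> c" if "norm y \<le> 1" "y \<bullet> c > cos r" for y :: 'a
  proof -
    have "cos r * norm y \<le> cos r" using that co by (simp add: mult_left_le)
    then show ?thesis using that by simp
  qed
  then show ?thesis
    using sphere_cone_eq[OF AB] sphere_cone_eq[OF As] ray_cone_ball[OF c, of r A] r by auto
qed

lemma sphere_cone_subset_slab:
  fixes c :: "'a::euclidean_space"
  assumes c: "norm c = 1" and A: "A \<subseteq> open_hemisphere c"
  shows "sphere_cone A \<subseteq> slab c 0 1"
proof
  fix y assume y: "y \<in> sphere_cone A"
  have "sphere_cone A \<subseteq> sphere_cone (open_hemisphere c)"
    using A by (auto simp: sphere_cone_def)
  then have "y \<bullet> c > 0" "norm y \<le> 1" using y sphere_cone_hemi(1)[OF c] by auto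
  then show "y \<in> slab c 0 1" using inner_le_norm_unit[OF c, of y] by (simp add: slab_def)
qed

lemma cone_measure_split:
  fixes c :: "'a::euclidean_space"
  assumes c: "norm c = 1" and A: "A \<subseteq> open_hemisphere c" and Am: "sphere_cone A \<in> sets lebesgue"
    and s: "0 \<le> s0" "s0 \<le> 1"
  shows "measure lebesgue (sphere_cone A) = measure lebesgue (sphere_cone A \<inter> slab c 0 s0) + measure lebesgue (sphere_cone A \<inter> slab c s0 1)"
proof -
  have As: "A \<subseteq> sphere 0 1" using A by (auto simp: open_hemisphere_def)
  have "sphere_cone A = sphere_cone A \<inter> slab c 0 1" using sphere_cone_subset_slab[OF c A] by auto
  then show ?thesis using slab_split[OF sphere_cone_lmeasurable[OF As Am] s, of c] by simp
qed

lemma cone_ball_measure: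
  fixes c :: "'a::euclidean_space"
  assumes c: "norm c = 1" and A: "A \<subseteq> open_hemisphere c" and Am: "sphere_cone A \<in> sets lebesgue"
    and r: "0 < r" "r < pi / 2"
  shows "measure lebesgue (sphere_cone (A \<inter> sph_ball c r))
    = cos r ^ DIM('a) * pyr_vol c A (tan r) + measure lebesgue (sphere_cone A \<inter> slab c (cos r) 1)"
proof -
  note cr = cos_facts[OF r]
  have As: "A \<subseteq> sphere 0 1" using A by (auto simp: open_hemisphere_def)
  have AB: "A \<inter> sph_ball c r \<subseteq> open_hemisphere c" using A by auto
  have ABm: "sphere_cone (A \<inter> sph_ball c r) \<in> sets lebesgue"
    using sphere_cone_ball_lebesgue[OF c As Am, of r] r by simp
  have below: "sphere_cone (A \<inter> sph_ball c r) \<inter> slab c 0 (cos r)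
      = pyramid c A (tan r) \<inter> {y. y \<bullet> c \<le> cos r}"
    using sphere_cone_subset_slab[OF c AB] cone_ball_below[OF c A r] by (auto simp: slab_def)
  have above: "sphere_cone (A \<inter> sph_ball c r) \<inter> slab c (cos r) 1 = sphere_cone A \<inter> slab c (cos r) 1"
    using cone_ball_above[OF c A, of r] r by (auto simp: slab_def)
  show ?thesis
    using cone_measure_split[OF c AB ABm, of "cos r"] cr below above
      measure_pyramid_le[of "cos r" c A "tan r"] by (simp add: pyr_vol_def)
qed

lemma ball_part_bound:
  fixes c :: "'a::euclidean_space"
  assumes c: "norm c = 1" and T: "T \<subseteq> open_hemisphere c" and st: "sph_star_shaped c T"
    and Tm: "sphere_cone T \<in> sets lebesgue" and r: "0 < r" "r < pi / 2"
  shows "pyr_vol c T (tan r) * measure lebesgue (sphere_cone (sph_ball c r))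
    \<le> pyr_vol c (open_hemisphere c) (tan r) * measure lebesgue (sphere_cone (sph_ball c r \<inter> T))"
proof -
  define H where "H = open_hemisphere c"
  define p where "p = pyr_vol c T (tan r)"
  define q where "q = pyr_vol c H (tan r)"
  define \<sigma> where "\<sigma> = cos r ^ DIM('a)"
  define Y where "Y = measure lebesgue (sphere_cone T \<inter> slab c (cos r) 1)"
  define Q where "Q = measure lebesgue (sphere_cone H \<inter> slab c (cos r) 1)"
  have Hm: "sphere_cone H \<in> sets lebesgue" using sphere_cone_hemi(2)[OF c] by (simp add: H_def)
  have B: "H \<inter> sph_ball c r = sph_ball c r"
    using sph_ball_subset_hemisphere[OF c, of r] r by (auto simp: H_def)
  have tB: "measure lebesgue (sphere_cone (sph_ball c r \<inter> T)) = \<sigma> * p + Y"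
    using cone_ball_measure[OF c T Tm r] by (simp add: Int_commute \<sigma>_def p_def Y_def)
  have hB: "measure lebesgue (sphere_cone (sph_ball c r)) = \<sigma> * q + Q"
    using cone_ball_measure[OF c _ Hm r] B by (simp add: H_def \<sigma>_def q_def Q_def)
  have "p * Q \<le> q * Y"
    using comparison_above[OF c T st Tm r] by (simp add: H_def p_def q_def Q_def Y_def)
  then have "p * (\<sigma> * q + Q) \<le> q * (\<sigma> * p + Y)"
    by (simp add: algebra_simps)
  then show ?thesis by (simp add: tB hB p_def q_def H_def)
qed

lemma rest_part_bound:
  fixes c :: "'a::euclidean_space"
  assumes c: "norm c = 1" and T: "T \<subseteq> open_hemisphere c" and st: "sph_star_shaped c T"
    and Tm: "sphere_cone T \<in> sets lebesgue" and r: "0 < r" "r < pi / 2"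
  shows "pyr_vol c (open_hemisphere c) (tan r)
      * (measure lebesgue (sphere_cone T) - measure lebesgue (sphere_cone (sph_ball c r \<inter> T)))
    \<le> pyr_vol c T (tan r)
      * (measure lebesgue (sphere_cone (open_hemisphere c)) - measure lebesgue (sphere_cone (sph_ball c r)))"
proof -
  define H where "H = open_hemisphere c"
  define p where "p = pyr_vol c T (tan r)"
  define q where "q = pyr_vol c H (tan r)"
  define \<sigma> where "\<sigma> = cos r ^ DIM('a)"
  define Y where "Y = measure lebesgue (sphere_cone T \<inter> slab c (cos r) 1)"
  define Q where "Q = measure lebesgue (sphere_cone H \<inter> slab c (cos r) 1)"
  define Y0 where "Y0 = measure lebesgue (sphere_cone T \<inter> slab c 0 (cos r))"
  define Q0 where "Q0 = measure lebesgue (sphere_cone H \<inter> slab c 0 (cos r))"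
  have Hm: "sphere_cone H \<in> sets lebesgue" using sphere_cone_hemi(2)[OF c] by (simp add: H_def)
  have B: "H \<inter> sph_ball c r = sph_ball c r"
    using sph_ball_subset_hemisphere[OF c, of r] r by (auto simp: H_def)
  have s0: "0 \<le> cos r" "cos r \<le> 1" using cos_facts[OF r] by auto
  have tB: "measure lebesgue (sphere_cone (sph_ball c r \<inter> T)) = \<sigma> * p + Y"
    using cone_ball_measure[OF c T Tm r] by (simp add: Int_commute \<sigma>_def p_def Y_def)
  have hB: "measure lebesgue (sphere_cone (sph_ball c r)) = \<sigma> * q + Q"
    using cone_ball_measure[OF c _ Hm r] B by (simp add: H_def \<sigma>_def q_def Q_def)
  have t: "measure lebesgue (sphere_cone T) = Y0 + Y"
    using cone_measure_split[OF c T Tm s0] by (simp add: Y0_def Y_def)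
  have h: "measure lebesgue (sphere_cone H) = Q0 + Q"
    using cone_measure_split[OF c _ Hm s0] by (simp add: H_def Q0_def Q_def)
  have "q * Y0 \<le> p * Q0"
    using comparison_below[OF c T st Tm r] by (simp add: H_def p_def q_def Q0_def Y0_def)
  then have "q * (Y0 + Y - (\<sigma> * p + Y)) \<le> p * (Q0 + Q - (\<sigma> * q + Q))"
    by (simp add: algebra_simps)
  then show ?thesis
    unfolding H_def[symmetric] p_def[symmetric] q_def[symmetric] t h tB hB .
qed

lemma cone_ball_le_cone_hemisphere:
  fixes c :: "'a::euclidean_space"
  assumes c: "norm c = 1" and r: "0 \<le> r" "r \<le> pi / 2"
  shows "measure lebesgue (sphere_cone (sph_ball c r))
    \<le> measure lebesgue (sphere_cone (open_hemisphere c))"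
proof (rule measure_mono_fmeasurable)
  have Hs: "open_hemisphere c \<subseteq> sphere 0 1" by (auto simp: open_hemisphere_def)
  have B: "open_hemisphere c \<inter> sph_ball c r = sph_ball c r"
    using sph_ball_subset_hemisphere[OF c r] by auto
  show "sphere_cone (sph_ball c r) \<subseteq> sphere_cone (open_hemisphere c)"
    using sph_ball_subset_hemisphere[OF c r] unfolding sphere_cone_def by blast
  show "sphere_cone (sph_ball c r) \<in> sets lebesgue"
    using sphere_cone_ball_lebesgue[OF c Hs sphere_cone_hemi(2)[OF c], of r] r B by simp
  show "sphere_cone (open_hemisphere c) \<in> lmeasurable"
    by (rule sphere_cone_lmeasurable[OF Hs sphere_cone_hemi(2)[OF c]])
qed

lemma cross_ratio_inequality:
  fixes p q t tB h hB :: real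
  assumes q: "0 < q" and hB: "0 \<le> hB" "hB \<le> h"
    and ball: "p * hB \<le> q * tB" and rest: "q * (t - tB) \<le> p * (h - hB)"
  shows "hB * t \<le> tB * h"
proof -
  have "q * (hB * t) \<le> q * (hB * tB) + (p * hB) * (h - hB)"
    using mult_left_mono[OF rest hB(1)] by (simp add: algebra_simps)
  also have "\<dots> \<le> q * (hB * tB) + (q * tB) * (h - hB)"
    using mult_right_mono[OF ball] hB by simp
  also have "\<dots> = q * (tB * h)" by (simp add: algebra_simps)
  finally show ?thesis using q by simp
qed

text \<open>The main theorem: the case r = pi/2 is trivial, otherwise combine the two bounds.  The
  argument works in every dimension.\<close>
theorem mainTheorem11:
  fixes c :: "'a::euclidean_space" and r :: real and T :: "'a set"
  assumes "DIM('a) \<ge> 2"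
    and "c \<in> sphere 0 1"
    and "0 < r" and "r \<le> pi / 2"
    and "T \<subseteq> open_hemisphere c"
    and "sphere_measurable T"
    and "sph_star_shaped c T"
  shows "surf_measure (sph_ball c r \<inter> T) * surf_measure (open_hemisphere c)
           \<ge> surf_measure (sph_ball c r) * surf_measure T"
proof -
  have c: "norm c = 1" using assms(2) by simp
  have Tm: "sphere_cone T \<in> sets lebesgue" using assms(6) by (simp add: sphere_measurable_def)
  note T = assms(5) and st = assms(7)
  show ?thesis
  proof (cases "r = pi / 2")
    case True
    have B: "sph_ball c r = open_hemisphere c" unfolding True by (rule sph_ball_half_pi[OF c])
    then have "sph_ball c r \<inter> T = T" using T by auto
    then show ?thesis using B by (simp add: mult.commute)
  next
    case False
    then have r: "0 < r" "r < pi / 2" using assms(3,4) by auto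
    have q: "0 < pyr_vol c (open_hemisphere c) (tan r)"
      using pyr_vol_hemi_scale[OF c, of "tan r" 1] pyr_vol_hemi_pos[OF c] cos_facts[OF r] by simp
    have "measure lebesgue (sphere_cone (sph_ball c r)) * measure lebesgue (sphere_cone T)
        \<le> measure lebesgue (sphere_cone (sph_ball c r \<inter> T))
          * measure lebesgue (sphere_cone (open_hemisphere c))"
      using cross_ratio_inequality[OF q _ cone_ball_le_cone_hemisphere[OF c]
          ball_part_bound[OF c T st Tm r] rest_part_bound[OF c T st Tm r]] r by simp
    from mult_left_mono[OF this, of "real DIM('a) * real DIM('a)"] show ?thesis
      unfolding surf_measure_def by (simp add: ac_simps)
  qed
qed

end
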